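(* Let $\hat A$ be a collection of pairwise disjoint nonempty subsets of $S^1$ with $|\hat A|\ge 4$ such that $\bigcup_{J\in\hat A}J$ is dense in $S^1$ and each $J\in\hat A$ is either a single point or an open interval. Let $h:\hat A\to\hat A$ be a bijection which maps the set of non-singleton elements of $\hat A$ onto itself. Then $h$ is order preserving if and only if, whenever $J_1,J_2,J_3,J_4\in\hat A$ satisfy $J_1<J_2<J_3<J_4$, the sets $h(J_3)$ and $h(J_4)$ lie in the same connected component of $S^1\setminus(h(J_1)\cup h(J_2))$.
   Context: For four distinct points $x_1,x_2,x_3,x_4\in S^1$ write $x_1<x_2<x_3<x_4$ if there is a homeomorphism $g:S^1\to S^1$ (possibly orientation reversing) with $g(i^n)=x_n$ for $n=1,2,3,4$ (here $S^1\subset\mathbb{C}$ is the unit circle), i.e. the points occur in this cyclic order in one of the two directions. For pairwise disjoint nonempty sets $J_1,\dots,J_4\subset S^1$ write $J_1<J_2<J_3<J_4$ if $x_1<x_2<x_3<x_4$ whenever $x_i\in J_i$ for each $i$. If $\hat A$ is a collection of pairwise disjoint subsets of $S^1$, a bijection $h:\hat A\to\hat A$ is order preserving if there exists a homeomorphism $g:S^1\to S^1$ with $g(J)=h(J)$ for every $J\in\hat A$; such $g$ is called compatible with $h$. *)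

theory Defs
  imports "HOL-Analysis.Analysis"
begin

abbreviation S1 :: "complex set" where "S1 \<equiv> sphere 0 1"

text \<open>Self-homeomorphisms of S^1 (possibly orientation reversing).\<close>
definition circle_homeo :: "(complex \<Rightarrow> complex) \<Rightarrow> bool" where
  "circle_homeo g \<longleftrightarrow> (\<exists>g'. homeomorphism S1 S1 g g')"

text \<open>x1 < x2 < x3 < x4: some homeomorphism g of S^1 with g(i^n) = x_n.\<close>
definition cyc4 :: "complex \<Rightarrow> complex \<Rightarrow> complex \<Rightarrow> complex \<Rightarrow> bool" where
  "cyc4 x1 x2 x3 x4 \<longleftrightarrow> x1 \<in> S1 \<and> x2 \<in> S1 \<and> x3 \<in> S1 \<and> x4 \<in> S1 \<and>
     distinct [x1, x2, x3, x4] \<and>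
     (\<exists>g. circle_homeo g \<and> g (\<i>^1) = x1 \<and> g (\<i>^2) = x2 \<and> g (\<i>^3) = x3 \<and> g (\<i>^4) = x4)"

definition set_cyc4 :: "complex set \<Rightarrow> complex set \<Rightarrow> complex set \<Rightarrow> complex set \<Rightarrow> bool" where
  "set_cyc4 J1 J2 J3 J4 \<longleftrightarrow>
     J1 \<noteq> {} \<and> J2 \<noteq> {} \<and> J3 \<noteq> {} \<and> J4 \<noteq> {} \<and>
     pairwise disjnt {J1, J2, J3, J4} \<and> distinct [J1, J2, J3, J4] \<and>
     (\<forall>x1\<in>J1. \<forall>x2\<in>J2. \<forall>x3\<in>J3. \<forall>x4\<in>J4. cyc4 x1 x2 x3 x4)"

definition open_arc :: "complex set \<Rightarrow> bool" where
  "open_arc J \<longleftrightarrow> (\<exists>a b. a < b \<and> b - a < 2 * pi \<and> J = cis ` {a<..<b})"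

definition order_preserving :: "complex set set \<Rightarrow> (complex set \<Rightarrow> complex set) \<Rightarrow> bool" where
  "order_preserving A h \<longleftrightarrow> (\<exists>g. circle_homeo g \<and> (\<forall>J\<in>A. g ` J = h J))"

end

theory Submission
  imports Defs
begin

text \<open>
  A homeomorphism of the circle maps the arc that joins a point of \<open>J3\<close> to a point of \<open>J4\<close> and
  avoids \<open>J1 \<union> J2\<close> to a connected set that contains \<open>h J3 \<union> h J4\<close> and avoids
  \<open>h J1 \<union> h J2\<close>; this is the forward implication.

  For the converse choose a point \<open>\<rho> J\<close> in every piece and let \<open>\<psi> J = \<rho> (h J)\<close>. When the
  points \<open>\<rho> J1\<close>, \<open>\<rho> J3\<close> separate \<open>\<rho> J2\<close> from \<open>\<rho> J4\<close>, connectedness of the pieces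
  gives \<open>J1 < J2 < J3 < J4\<close>, so by hypothesis \<open>\<psi> J1\<close>, \<open>\<psi> J2\<close> do not separate \<open>\<psi> J3\<close>
  from \<open>\<psi> J4\<close>. As exactly one of the three ways of pairing four points is separating, \<open>h\<close>
  preserves the separation relation of the representatives, and therefore it preserves or
  reverses the orientation of all triples of them; composing with complex conjugation we may
  assume that it preserves it. Affine reparametrisations of the arcs then glue to an injective,
  orientation-preserving map from the dense set \<open>\<Union>A\<close> onto itself. Its lift to the real line is
  strictly increasing with dense image and commutes with the translation by \<open>2\<pi>\<close>, so it extends
  to an increasing homeomorphism of the line, which descends to the required homeomorphism of
  the circle.
\<close>

section \<open>Angles on the circle\<close>

lemma cis_eq_cis_iff: "cis s = cis t \<longleftrightarrow> (\<exists>n::int. s = t + 2 * pi * n)"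
proof -
  have "cis s = cis t \<longleftrightarrow> sin s = sin t \<and> cos s = cos t"
    by (auto simp: complex_eq_iff)
  also have "\<dots> \<longleftrightarrow> (\<exists>n::int. s = t + 2 * pi * n)"
    by (rule sin_cos_eq_iff)
  finally show ?thesis .
qed

lemma cis_add_2pi_int [simp]: "cis (t + 2 * pi * of_int n) = cis t"
  using cis_eq_cis_iff by blast

lemma cis_diff_2pi_int [simp]: "cis (t - 2 * pi * of_int n) = cis t"
  using cis_add_2pi_int[of t "- n"] by simp

lemma cis_add_2pi [simp]: "cis (t + 2 * pi) = cis t"
  using cis_add_2pi_int[of t 1] by simp

lemma cis_diff_2pi [simp]: "cis (t - 2 * pi) = cis t"
  using cis_add_2pi_int[of t "-1"] by simp

lemma cis_eq_cis_window:
  assumes "cis s = cis t" "\<bar>s - t\<bar> < 2 * pi"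
  shows "s = t"
proof -
  obtain n :: int where n: "s = t + 2 * pi * n"
    using assms(1) cis_eq_cis_iff by blast
  have "n = 0"
  proof (rule ccontr)
    assume "n \<noteq> 0"
    then have "2 * pi * 1 \<le> 2 * pi * \<bar>real_of_int n\<bar>"
      by (intro mult_left_mono) auto
    then show False using assms(2) n by (simp add: abs_mult)
  qed
  then show ?thesis using n by simp
qed

lemma Arg2pi_cis: "0 \<le> t \<Longrightarrow> t < 2 * pi \<Longrightarrow> Arg2pi (cis t) = t"
  by (simp add: cis_conv_exp Arg2pi_exp)

lemma cis_Arg2pi: "z \<in> S1 \<Longrightarrow> cis (Arg2pi z) = z"
  using Arg2pi_eq[of z] by (simp add: cis_conv_exp)

lemma S1_cis_window:
  assumes "z \<in> S1"
  obtains t where "w \<le> t" "t < w + 2 * pi" "z = cis t"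
proof -
  define s where "s = Arg2pi z"
  define n where "n = \<lfloor>(s - w) / (2 * pi)\<rfloor>"
  have "2 * pi * n \<le> s - w" "s - w < 2 * pi * (n + 1)"
    using floor_divide_lower[of "2 * pi" "s - w"] floor_divide_upper[of "2 * pi" "s - w"]
    unfolding n_def by (simp_all add: field_simps)
  moreover have "z = cis (s + 2 * pi * of_int (- n))"
    using cis_Arg2pi[OF assms] unfolding s_def by simp
  ultimately show ?thesis
    by (intro that[of "s + 2 * pi * of_int (- n)"]) (auto simp: algebra_simps)
qed

lemma S1_cis_window_open:
  assumes "z \<in> S1" "z \<noteq> cis w"
  obtains t where "w < t" "t < w + 2 * pi" "z = cis t"
proof -
  obtain t where t: "w \<le> t" "t < w + 2 * pi" "z = cis t"
    using S1_cis_window[OF assms(1)] .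
  moreover have "t \<noteq> w" using t(3) assms(2) by auto
  ultimately show ?thesis by (intro that[of t]) auto
qed

lemma cis_eq_cis_window_iff:
  "w \<le> s \<Longrightarrow> s < w + 2 * pi \<Longrightarrow> w \<le> t \<Longrightarrow> t < w + 2 * pi \<Longrightarrow> cis s = cis t \<longleftrightarrow> s = t"
  using cis_eq_cis_window[of s t] by auto

definition ccw_angle :: "complex \<Rightarrow> complex \<Rightarrow> real" where
  "ccw_angle a z = Arg2pi (z / a)"

lemma ccw_angle_bounds: "0 \<le> ccw_angle a z" "ccw_angle a z < 2 * pi"
  unfolding ccw_angle_def using Arg2pi by auto

lemma cis_ccw_angle:
  assumes "a \<in> S1" "z \<in> S1"
  shows "a * cis (ccw_angle a z) = z"
proof -
  have "z / a \<in> S1" using assms by (simp add: norm_divide)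
  then have "cis (ccw_angle a z) = z / a" unfolding ccw_angle_def by (rule cis_Arg2pi)
  then show ?thesis using assms by (auto simp: field_simps)
qed

lemma cis_add_ccw_angle:
  assumes "a = cis s" "z \<in> S1"
  shows "cis (s + ccw_angle a z) = z"
  using cis_ccw_angle[of a z] assms unfolding cis_mult[symmetric] by simp

lemma ccw_angle_eq_0_iff:
  assumes "a \<in> S1" "z \<in> S1"
  shows "ccw_angle a z = 0 \<longleftrightarrow> z = a"
proof
  show "z = a" if "ccw_angle a z = 0" using cis_ccw_angle[OF assms] that by simp
  show "ccw_angle a z = 0" if "z = a"
    using that assms Arg2pi_cis[of 0] by (auto simp: ccw_angle_def)
qed

lemma ccw_angle_inj:
  assumes "a \<in> S1" "z \<in> S1" "y \<in> S1" "ccw_angle a z = ccw_angle a y"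
  shows "z = y"
proof -
  have "z = a * cis (ccw_angle a z)" using cis_ccw_angle[OF assms(1,2)] by simp
  also have "\<dots> = a * cis (ccw_angle a y)" by (simp only: assms(4))
  also have "\<dots> = y" using cis_ccw_angle[OF assms(1,3)] .
  finally show ?thesis .
qed

lemma continuous_on_ccw_angle:
  assumes "a \<in> S1"
  shows "continuous_on (S1 - {a}) (ccw_angle a)"
proof -
  have "z / a \<notin> \<real>\<^sub>\<ge>\<^sub>0" if "z \<in> S1 - {a}" for z
  proof
    assume "z / a \<in> \<real>\<^sub>\<ge>\<^sub>0"
    moreover have "norm (z / a) = 1" using that assms by (simp add: norm_divide)
    ultimately have "z / a = 1"
      by (metis complex_nonneg_Reals_iff cmod_eq_Re complex_eqI abs_of_nonneg one_complex.simps)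
    then show False using that assms by auto
  qed
  then have "continuous_on (S1 - {a}) (Arg2pi \<circ> (\<lambda>z. z / a))"
    using assms by (intro continuous_on_compose continuous_intros continuous_at_imp_continuous_on
        ballI continuous_at_Arg2pi) auto
  then show ?thesis by (simp add: ccw_angle_def o_def)
qed

section \<open>Cyclic order of points on the circle\<close>

definition cyclic3 :: "real \<Rightarrow> real \<Rightarrow> real \<Rightarrow> bool" where
  "cyclic3 s t u \<longleftrightarrow> (s < t \<and> t < u) \<or> (t < u \<and> u < s) \<or> (u < s \<and> s < t)"

definition ccw :: "complex \<Rightarrow> complex \<Rightarrow> complex \<Rightarrow> bool" where
  "ccw a b c \<longleftrightarrow> (\<exists>s t u. a = cis s \<and> b = cis t \<and> c = cis u \<and> s < t \<and> t < u \<and> u < s + 2 * pi)"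

lemma ccw_in_S1: "ccw a b c \<Longrightarrow> a \<in> S1 \<and> b \<in> S1 \<and> c \<in> S1"
  unfolding ccw_def by auto

lemma ccw_from:
  assumes "ccw a b c" "a = cis s"
  obtains t u where "b = cis t" "c = cis u" "s < t" "t < u" "u < s + 2 * pi"
proof -
  obtain s0 t0 u0 where h: "a = cis s0" "b = cis t0" "c = cis u0" "s0 < t0" "t0 < u0" "u0 < s0 + 2 * pi"
    using assms(1) unfolding ccw_def by blast
  obtain n :: int where "s = s0 + 2 * pi * n"
    using assms(2) h(1) cis_eq_cis_iff by metis
  then show ?thesis
    using h by (intro that[of "t0 + 2 * pi * n" "u0 + 2 * pi * n"]) auto
qed

lemma ccw_rotate: "ccw a b c \<Longrightarrow> ccw b c a"
  unfolding ccw_def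
  by (elim exE conjE, intro exI[of _ "_ :: real"] exI[of _ "_ + 2 * pi"] conjI) auto

lemma ccw_rotate_iff: "ccw a b c \<longleftrightarrow> ccw b c a"
  using ccw_rotate by blast

lemma ccw_not_swap: "ccw a b c \<Longrightarrow> \<not> ccw a c b"
proof
  assume 1: "ccw a b c" and 2: "ccw a c b"
  obtain s t u where h: "a = cis s" "b = cis t" "c = cis u" "s < t" "t < u" "u < s + 2 * pi"
    using 1 unfolding ccw_def by blast
  obtain u' t' where h': "c = cis u'" "b = cis t'" "s < u'" "u' < t'" "t' < s + 2 * pi"
    using ccw_from[OF 2 h(1)] by blast
  have "t = t'" "u = u'"
    using cis_eq_cis_window_iff[of s t t'] cis_eq_cis_window_iff[of s u u'] h h' by auto
  then show False using h h' by linarith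
qed

lemma ccw_distinct:
  assumes "ccw a b c" shows "a \<noteq> b" "b \<noteq> c" "a \<noteq> c"
proof -
  obtain s t u where h: "a = cis s" "b = cis t" "c = cis u" "s < t" "t < u" "u < s + 2 * pi"
    using assms unfolding ccw_def by blast
  show "a \<noteq> b" using cis_eq_cis_window_iff[of s s t] h by force
  show "b \<noteq> c" using cis_eq_cis_window_iff[of s t u] h by force
  show "a \<noteq> c" using cis_eq_cis_window_iff[of s s u] h by force
qed

lemma cis_eq_cis_double_window:
  assumes "cis t = cis t'" "w \<le> t" "t < w + 2 * pi" "w \<le> t'" "t' < w + 4 * pi"
  shows "t = t' \<or> t = t' - 2 * pi"
proof (cases "t' < w + 2 * pi")
  case True
  then show ?thesis using cis_eq_cis_window_iff[of w t t'] assms by auto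
next
  case False
  then show ?thesis using cis_eq_cis_window_iff[of w t "t' - 2 * pi"] assms by auto
qed

lemma ccw_cis_window_iff:
  assumes "w \<le> s" "s < w + 2 * pi" "w \<le> t" "t < w + 2 * pi" "w \<le> u" "u < w + 2 * pi"
  shows "ccw (cis s) (cis t) (cis u) \<longleftrightarrow> cyclic3 s t u"
proof
  have base: "ccw (cis s) (cis t) (cis u)" if "s < t" "t < u" "u < s + 2 * pi" for s t u
    unfolding ccw_def using that by blast
  assume "cyclic3 s t u"
  then consider "s < t" "t < u" | "t < u" "u < s" | "u < s" "s < t"
    unfolding cyclic3_def by blast
  then show "ccw (cis s) (cis t) (cis u)"
  proof cases
    case 1 then show ?thesis using base assms by auto
  next
    case 2 then show ?thesis using base[of t u s] assms ccw_rotate by auto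
  next
    case 3 then show ?thesis using base[of u s t] assms ccw_rotate by auto
  qed
next
  assume "ccw (cis s) (cis t) (cis u)"
  then obtain t' u' where h: "cis t = cis t'" "cis u = cis u'" "s < t'" "t' < u'" "u' < s + 2 * pi"
    using ccw_from by metis
  have "t = t' \<or> t = t' - 2 * pi" "u = u' \<or> u = u' - 2 * pi"
    using cis_eq_cis_double_window[of t t' w] cis_eq_cis_double_window[of u u' w] h assms by auto
  then show "cyclic3 s t u" using h assms unfolding cyclic3_def by auto
qed

lemma ccw_or_swap:
  assumes "a \<in> S1" "b \<in> S1" "c \<in> S1" "a \<noteq> b" "b \<noteq> c" "a \<noteq> c"
  shows "ccw a b c \<or> ccw a c b"
proof -
  obtain sa sb sc where h: "a = cis sa" "b = cis sb" "c = cis sc"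
    "0 \<le> sa" "sa < 2 * pi" "0 \<le> sb" "sb < 2 * pi" "0 \<le> sc" "sc < 2 * pi"
    using S1_cis_window[OF assms(1), of 0] S1_cis_window[OF assms(2), of 0]
      S1_cis_window[OF assms(3), of 0] by (metis add_0)
  moreover have "sa \<noteq> sb" "sb \<noteq> sc" "sa \<noteq> sc" using h assms by auto
  ultimately have "cyclic3 sa sb sc \<or> cyclic3 sa sc sb"
    unfolding cyclic3_def by linarith
  then show ?thesis using h ccw_cis_window_iff[of 0] by simp
qed

lemma ccw_swap_iff:
  assumes "a \<in> S1" "b \<in> S1" "c \<in> S1" "a \<noteq> b" "b \<noteq> c" "a \<noteq> c"
  shows "ccw a c b \<longleftrightarrow> \<not> ccw a b c"
  using ccw_or_swap[OF assms] ccw_not_swap by blast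

lemma ccw_iff_ccw_angle_less:
  assumes "a \<in> S1" "x \<in> S1" "y \<in> S1" "x \<noteq> a" "y \<noteq> a"
  shows "ccw a x y \<longleftrightarrow> ccw_angle a x < ccw_angle a y"
proof -
  obtain s where s: "a = cis s" using S1_cis_window[OF assms(1)] by metis
  have pos: "0 < ccw_angle a x" "0 < ccw_angle a y"
    using ccw_angle_bounds ccw_angle_eq_0_iff assms by (metis order_le_less)+
  have "ccw a x y \<longleftrightarrow> ccw (cis s) (cis (s + ccw_angle a x)) (cis (s + ccw_angle a y))"
    using cis_add_ccw_angle[OF s] assms s by simp
  also have "\<dots> \<longleftrightarrow> cyclic3 s (s + ccw_angle a x) (s + ccw_angle a y)"
    using ccw_angle_bounds by (intro ccw_cis_window_iff) auto
  also have "\<dots> \<longleftrightarrow> ccw_angle a x < ccw_angle a y"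
    unfolding cyclic3_def using pos by auto
  finally show ?thesis .
qed

lemma ccw_cnj: "ccw a b c \<Longrightarrow> ccw (cnj a) (cnj c) (cnj b)"
  unfolding ccw_def
  by (elim exE conjE, rule exI[of _ "- _ - 2 * pi"], rule exI[of _ "- _"], rule exI[of _ "- _"])
    (auto simp: cis_cnj)

definition cyclic4 :: "real \<Rightarrow> real \<Rightarrow> real \<Rightarrow> real \<Rightarrow> bool" where
  "cyclic4 s1 s2 s3 s4 \<longleftrightarrow>
     (cyclic3 s1 s2 s3 \<and> cyclic3 s1 s3 s4) \<or> (cyclic3 s1 s4 s3 \<and> cyclic3 s1 s3 s2)"

definition circ_ordered :: "complex \<Rightarrow> complex \<Rightarrow> complex \<Rightarrow> complex \<Rightarrow> bool" where
  "circ_ordered x1 x2 x3 x4 \<longleftrightarrow> (ccw x1 x2 x3 \<and> ccw x1 x3 x4) \<or> (ccw x1 x4 x3 \<and> ccw x1 x3 x2)"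

text \<open>\<open>separates a b c d\<close>: the points \<open>c\<close> and \<open>d\<close> lie on different arcs of \<open>S1 - {a, b}\<close>.\<close>

definition separates :: "complex \<Rightarrow> complex \<Rightarrow> complex \<Rightarrow> complex \<Rightarrow> bool" where
  "separates a b c d \<longleftrightarrow> circ_ordered a c b d"

lemma cyclic4_commute:
  "cyclic4 a c b d \<Longrightarrow> cyclic4 b c a d"
  "cyclic4 a c b d \<Longrightarrow> cyclic4 a d b c"
  "cyclic4 a c b d \<Longrightarrow> cyclic4 c a d b"
  unfolding cyclic4_def cyclic3_def by smt+

lemma cyclic4_cases:
  assumes "distinct [a, b, c, d]"
  shows "cyclic4 a c b d \<or> cyclic4 a b c d \<or> cyclic4 a b d c"
proof -
  have "a \<noteq> b" "a \<noteq> c" "a \<noteq> d" "b \<noteq> c" "b \<noteq> d" "c \<noteq> d" using assms by auto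
  then show ?thesis unfolding cyclic4_def cyclic3_def by smt
qed

lemma cyclic3_eq_iff_not_cyclic4:
  assumes "distinct [a, b, c, d]"
  shows "(cyclic3 a b c \<longleftrightarrow> cyclic3 a b d) \<longleftrightarrow> \<not> cyclic4 a c b d"
proof -
  have "a \<noteq> b" "a \<noteq> c" "a \<noteq> d" "b \<noteq> c" "b \<noteq> d" "c \<noteq> d" using assms by auto
  then show ?thesis unfolding cyclic4_def cyclic3_def by smt
qed

lemma cyclic4_not_cyclic4: "cyclic4 a b c d \<Longrightarrow> \<not> cyclic4 a c b d"
  unfolding cyclic4_def cyclic3_def by smt

lemma circ_ordered_cis_window_iff:
  assumes "w \<le> a" "a < w + 2 * pi" "w \<le> b" "b < w + 2 * pi"
    "w \<le> c" "c < w + 2 * pi" "w \<le> d" "d < w + 2 * pi"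
  shows "circ_ordered (cis a) (cis b) (cis c) (cis d) \<longleftrightarrow> cyclic4 a b c d"
  unfolding circ_ordered_def cyclic4_def using assms by (simp add: ccw_cis_window_iff[of w])

lemma circ_ordered_distinct:
  assumes "circ_ordered a b c d"
  shows "distinct [a, b, c, d]" "a \<in> S1" "b \<in> S1" "c \<in> S1" "d \<in> S1"
proof -
  show "a \<in> S1" "b \<in> S1" "c \<in> S1" "d \<in> S1"
    using assms ccw_in_S1 unfolding circ_ordered_def by blast+
  show "distinct [a, b, c, d]"
    using assms ccw_distinct[of a b c] ccw_distinct[of a c d] ccw_distinct[of a d c]
      ccw_distinct[of a c b] ccw_not_swap[of a c b]
    unfolding circ_ordered_def by auto
qed

lemma S1_lift4_rule:
  assumes "a \<in> S1" "b \<in> S1" "c \<in> S1" "d \<in> S1"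
    and "\<And>sa sb sc sd. 0 \<le> sa \<Longrightarrow> sa < 2 * pi \<Longrightarrow> 0 \<le> sb \<Longrightarrow> sb < 2 * pi \<Longrightarrow>
      0 \<le> sc \<Longrightarrow> sc < 2 * pi \<Longrightarrow> 0 \<le> sd \<Longrightarrow> sd < 2 * pi \<Longrightarrow>
      P (cis sa) (cis sb) (cis sc) (cis sd)"
  shows "P a b c d"
proof -
  obtain sa where "0 \<le> sa" "sa < 2 * pi" "a = cis sa" using S1_cis_window[OF assms(1), of 0] by auto
  moreover obtain sb where "0 \<le> sb" "sb < 2 * pi" "b = cis sb" using S1_cis_window[OF assms(2), of 0] by auto
  moreover obtain sc where "0 \<le> sc" "sc < 2 * pi" "c = cis sc" using S1_cis_window[OF assms(3), of 0] by auto
  moreover obtain sd where "0 \<le> sd" "sd < 2 * pi" "d = cis sd" using S1_cis_window[OF assms(4), of 0] by auto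
  ultimately show ?thesis using assms(5) by simp
qed

lemma separates_commute:
  assumes "separates a b c d"
  shows "separates b a c d" "separates a b d c" "separates c d a b"
proof -
  have "a \<in> S1" "b \<in> S1" "c \<in> S1" "d \<in> S1"
    using circ_ordered_distinct assms unfolding separates_def by auto
  then have "separates a b c d \<longrightarrow> separates b a c d \<and> separates a b d c \<and> separates c d a b"
    by (rule S1_lift4_rule)
      (simp add: separates_def circ_ordered_cis_window_iff[of 0], metis cyclic4_commute)
  then show "separates b a c d" "separates a b d c" "separates c d a b" using assms by auto
qed

lemma separates_cases:
  assumes "a \<in> S1" "b \<in> S1" "c \<in> S1" "d \<in> S1" "distinct [a, b, c, d]"
  shows "separates a b c d \<or> separates a c b d \<or> separates a d b c"
proof -
  have "distinct [a, b, c, d] \<longrightarrow> separates a b c d \<or> separates a c b d \<or> separates a d b c"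
    by (rule S1_lift4_rule[OF assms(1-4)])
      (simp add: separates_def circ_ordered_cis_window_iff[of 0] cis_eq_cis_window_iff[of 0],
        metis cyclic4_cases distinct_length_2_or_more distinct_singleton)
  then show ?thesis using assms by auto
qed

lemma ccw_eq_ccw_iff_not_separates:
  assumes "a \<in> S1" "b \<in> S1" "c \<in> S1" "d \<in> S1" "distinct [a, b, c, d]"
  shows "(ccw a b c \<longleftrightarrow> ccw a b d) \<longleftrightarrow> \<not> separates a b c d"
proof -
  have "distinct [a, b, c, d] \<longrightarrow> ((ccw a b c \<longleftrightarrow> ccw a b d) \<longleftrightarrow> \<not> separates a b c d)"
    by (rule S1_lift4_rule[OF assms(1-4)])
      (simp add: separates_def circ_ordered_cis_window_iff[of 0] ccw_cis_window_iff[of 0]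
        cis_eq_cis_window_iff[of 0], metis cyclic3_eq_iff_not_cyclic4 distinct_length_2_or_more distinct_singleton)
  then show ?thesis using assms by auto
qed

lemma separates_not_separates:
  assumes "separates a c b d" shows "\<not> separates a b c d"
proof -
  have "a \<in> S1" "b \<in> S1" "c \<in> S1" "d \<in> S1"
    using circ_ordered_distinct assms unfolding separates_def by auto
  then have "separates a c b d \<longrightarrow> \<not> separates a b c d"
    by (rule S1_lift4_rule)
      (simp add: separates_def circ_ordered_cis_window_iff[of 0], metis cyclic4_not_cyclic4)
  then show ?thesis using assms by auto
qed

section \<open>Separation and connectedness\<close>

lemma connected_not_separates:
  assumes "connected C" "C \<subseteq> S1 - {a, c}" "b \<in> C" "d \<in> C" "a \<in> S1" "c \<in> S1"
  shows "\<not> separates a c b d"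
proof
  assume sep: "separates a c b d"
  have "c \<noteq> a" using circ_ordered_distinct(1)[of a b c d] sep unfolding separates_def by auto
  have less_iff: "ccw a x y \<longleftrightarrow> ccw_angle a x < ccw_angle a y" if "x \<in> {b, c, d}" "y \<in> {b, c, d}" for x y
    using that assms \<open>c \<noteq> a\<close> by (intro ccw_iff_ccw_angle_less) auto
  have "connected (ccw_angle a ` C)"
    using assms(1,2) continuous_on_subset[OF continuous_on_ccw_angle[OF assms(5)]]
    by (intro connected_continuous_image) auto
  moreover have "ccw_angle a c \<notin> ccw_angle a ` C"
  proof
    assume "ccw_angle a c \<in> ccw_angle a ` C"
    then obtain z where "z \<in> C" "ccw_angle a z = ccw_angle a c" by auto
    then show False using ccw_angle_inj[of a z c] assms by auto
  qed
  moreover have "ccw_angle a b < ccw_angle a c \<and> ccw_angle a c < ccw_angle a d \<or>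
      ccw_angle a d < ccw_angle a c \<and> ccw_angle a c < ccw_angle a b"
    using sep less_iff unfolding separates_def circ_ordered_def by auto
  ultimately show False using assms(3,4) unfolding connected_iff_interval
    by (meson imageI less_imp_le)
qed

lemma cyclic4_outside:
  assumes "s < a" "a < s + 2 * pi" "s < b" "b < s + 2 * pi" "s < q" "q < s + 2 * pi"
    "a \<noteq> b" "a \<noteq> q" "b \<noteq> q" "\<not> cyclic4 a s b q"
  shows "q < min a b \<or> max a b < q"
  using assms unfolding cyclic4_def cyclic3_def by smt

lemma cyclic4_inside:
  assumes "s < a" "a < s + 2 * pi" "s < b" "b < s + 2 * pi" "s < q" "q < s + 2 * pi"
    "q < min a b \<or> max a b < q" "min a b < t" "t < max a b"
  shows "cyclic4 a s b t" "cyclic4 a q b t"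
  using assms unfolding cyclic4_def cyclic3_def by smt+

lemma arc_avoiding:
  assumes S: "a \<in> S1" "b \<in> S1" "p \<in> S1" "q \<in> S1" and "distinct [a, b, p, q]"
    and "\<not> separates a b p q"
  obtains \<Gamma> where "connected \<Gamma>" "a \<in> \<Gamma>" "b \<in> \<Gamma>" "\<Gamma> \<subseteq> S1 - {p, q}"
    "\<And>y. y \<in> \<Gamma> - {a, b} \<Longrightarrow> separates a b p y \<and> separates a b q y"
proof -
  obtain s where s: "p = cis s" by (rule S1_cis_window[OF S(3)])
  obtain ta where ta: "s < ta" "ta < s + 2 * pi" "a = cis ta"
    by (rule S1_cis_window_open[OF S(1)]) (use assms(5) s in auto)
  obtain tb where tb: "s < tb" "tb < s + 2 * pi" "b = cis tb"
    by (rule S1_cis_window_open[OF S(2)]) (use assms(5) s in auto)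
  obtain tq where tq: "s < tq" "tq < s + 2 * pi" "q = cis tq"
    by (rule S1_cis_window_open[OF S(4)]) (use assms(5) s in auto)
  note t = ta tb tq
  have dist: "ta \<noteq> tb" "ta \<noteq> tq" "tb \<noteq> tq" using assms(5) t by auto
  have circ_iff: "circ_ordered (cis ta) (cis s) (cis tb) (cis u) \<longleftrightarrow> cyclic4 ta s tb u"
    if "s \<le> u" "u < s + 2 * pi" for u
    using t that by (intro circ_ordered_cis_window_iff) auto
  have "\<not> cyclic4 ta s tb tq" using assms(6) circ_iff[of tq] t s unfolding separates_def by auto
  then have outside: "tq < min ta tb \<or> max ta tb < tq" using cyclic4_outside t dist by blast
  define \<Gamma> where "\<Gamma> = cis ` {min ta tb .. max ta tb}"
  have "connected \<Gamma>"
    unfolding \<Gamma>_def by (intro connected_continuous_image continuous_intros) auto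
  moreover have "a \<in> \<Gamma>" "b \<in> \<Gamma>" unfolding \<Gamma>_def using t by auto
  moreover have "\<Gamma> \<subseteq> S1 - {p, q}"
  proof
    fix y assume "y \<in> \<Gamma>"
    then obtain u where u: "min ta tb \<le> u" "u \<le> max ta tb" "y = cis u"
      unfolding \<Gamma>_def by auto
    then have "s < u" "u < s + 2 * pi" using t by (auto simp: min_le_iff_disj le_max_iff_disj)
    moreover have "u \<noteq> tq" using u outside by auto
    ultimately show "y \<in> S1 - {p, q}"
      using cis_eq_cis_window_iff[of s s u] cis_eq_cis_window_iff[of s tq u] t u s by auto
  qed
  moreover have "separates a b p y \<and> separates a b q y" if y: "y \<in> \<Gamma> - {a, b}" for y
  proof -
    obtain u where u: "min ta tb \<le> u" "u \<le> max ta tb" "y = cis u"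
      using y unfolding \<Gamma>_def by auto
    moreover have "u \<noteq> ta" "u \<noteq> tb" using y u(3) t(3,6) by auto
    ultimately have "min ta tb < u" "u < max ta tb" by (auto simp: min_def max_def)
    then have "cyclic4 ta s tb u" "cyclic4 ta tq tb u" using cyclic4_inside t outside by blast+
    moreover have "s \<le> u" "u < s + 2 * pi" using u(1,2) t by (auto simp: min_le_iff_disj le_max_iff_disj)
    ultimately show ?thesis unfolding separates_def t(3,6,9) s u(3)
      using t by (auto simp: circ_ordered_cis_window_iff[of s])
  qed
  ultimately show ?thesis by (rule that)
qed

lemma not_separates_imp_connected:
  assumes "a \<in> S1" "b \<in> S1" "c \<in> S1" "d \<in> S1" "distinct [a, b, c, d]" "\<not> separates a c b d"
  obtains \<Gamma> where "connected \<Gamma>" "\<Gamma> \<subseteq> S1 - {a, c}" "b \<in> \<Gamma>" "d \<in> \<Gamma>"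
proof -
  have "distinct [b, d, a, c]" using assms(5) by auto
  moreover have "\<not> separates b d a c" using assms(6) separates_commute(3)[of b d a c] by auto
  ultimately show ?thesis
    by (rule arc_avoiding[OF assms(2,4,1,3)]) (rule that)
qed

lemma circle_homeo_separates:
  assumes g: "circle_homeo g" and sep: "separates a c b d"
  shows "separates (g a) (g c) (g b) (g d)"
proof (rule ccontr)
  obtain g' where "homeomorphism S1 S1 g g'" using g unfolding circle_homeo_def by blast
  then have g': "continuous_on S1 g'" "g ` S1 = S1" "\<And>x. x \<in> S1 \<Longrightarrow> g' (g x) = x"
    "\<And>y. y \<in> S1 \<Longrightarrow> g (g' y) = y" "g' ` S1 = S1"
    unfolding homeomorphism_def by auto
  have S: "a \<in> S1" "b \<in> S1" "c \<in> S1" "d \<in> S1" and dist: "distinct [a, b, c, d]"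
    using circ_ordered_distinct sep unfolding separates_def by auto
  have "inj_on g S1" by (rule inj_on_inverseI[of _ g']) (use g'(3) in auto)
  then have "distinct [g a, g b, g c, g d]" using dist S by (simp add: inj_on_eq_iff)
  moreover assume "\<not> separates (g a) (g c) (g b) (g d)"
  ultimately obtain \<Gamma> where \<Gamma>: "connected \<Gamma>" "\<Gamma> \<subseteq> S1 - {g a, g c}" "g b \<in> \<Gamma>" "g d \<in> \<Gamma>"
    using not_separates_imp_connected[of "g a" "g b" "g c" "g d"] S g'(2) by blast
  have "connected (g' ` \<Gamma>)"
    using \<Gamma>(1,2) by (intro connected_continuous_image continuous_on_subset[OF g'(1)]) auto
  moreover have "g' ` \<Gamma> \<subseteq> S1 - {a, c}"
  proof
    fix x assume "x \<in> g' ` \<Gamma>"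
    then obtain y where y: "y \<in> \<Gamma>" "x = g' y" by blast
    then have "y \<in> S1" "y \<noteq> g a" "y \<noteq> g c" using \<Gamma>(2) by auto
    then show "x \<in> S1 - {a, c}" using y(2) g'(4,5) by auto
  qed
  moreover have "b \<in> g' ` \<Gamma>" "d \<in> g' ` \<Gamma>"
    using \<Gamma>(3,4) S g'(3) by (metis imageI)+
  ultimately show False using connected_not_separates sep S by blast
qed

section \<open>Homeomorphisms from order-preserving maps\<close>

lemma dense_S1_cis:
  assumes "S1 \<subseteq> closure V" "V \<subseteq> S1" "a < b"
  obtains s where "a < s" "s < b" "cis s \<in> V"
proof -
  define m where "m = (a + b) / 2"
  define e where "e = (b - a) / 2"
  have e: "e > 0" using assms unfolding e_def by simp
  have "continuous (at 1) Arg" by (rule continuous_at_Arg) auto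
  then obtain dl where dl: "dl > 0" "\<And>y. dist y 1 < dl \<Longrightarrow> dist (Arg y) (Arg 1) < e"
    unfolding continuous_at_eps_delta using e by blast
  have "cis m \<in> closure V" using assms(1) by auto
  then obtain v where v: "v \<in> V" "dist (cis m) v < dl" using closure_approachableD dl(1) by blast
  have v1: "norm v = 1" using v(1) assms(2) by auto
  have "v / cis m - 1 = (v - cis m) / cis m" by (simp add: field_simps)
  then have "dist (v / cis m) 1 = dist (cis m) v"
    by (simp add: dist_norm norm_divide norm_minus_commute)
  then have "\<bar>Arg (v / cis m)\<bar> < e" using dl(2) v(2) by (simp add: dist_real_def)
  moreover have "v = cis (m + Arg (v / cis m))"
  proof -
    have "v / cis m \<noteq> 0" using v1 by auto
    then have "cis (Arg (v / cis m)) = v / cis m"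
      using cis_Arg[of "v / cis m"] v1 by (simp add: sgn_div_norm norm_divide)
    then show ?thesis by (simp add: cis_mult[symmetric] field_simps)
  qed
  ultimately show ?thesis
    using v(1) by (intro that[of "m + Arg (v / cis m)"]) (auto simp: m_def e_def field_simps)
qed

lemma strict_mono_dense_extension:
  fixes D :: "real set" and G :: "real \<Rightarrow> real"
  assumes dense: "\<And>a b. a < b \<Longrightarrow> \<exists>s\<in>D. a < s \<and> s < b"
    and mono: "\<And>s t. s \<in> D \<Longrightarrow> t \<in> D \<Longrightarrow> s < t \<Longrightarrow> G s < G t"
    and dense_image: "\<And>a b. a < b \<Longrightarrow> \<exists>s\<in>D. a < G s \<and> G s < b"
  obtains F where "continuous_on UNIV F" "strict_mono F" "\<And>s. s \<in> D \<Longrightarrow> F s = G s"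
proof -
  define F where "F t = Sup (G ` {s\<in>D. s \<le> t})" for t
  have nonempty: "G ` {s\<in>D. s \<le> t} \<noteq> {}" for t
    using dense[of "t - 1" t] by fastforce
  have bdd: "bdd_above (G ` {s\<in>D. s \<le> t})" for t
  proof -
    obtain s1 where "s1 \<in> D" "t < s1" using dense[of t "t + 1"] by auto
    then show ?thesis using mono by (intro bdd_aboveI[where M="G s1"]) fastforce
  qed
  have upper: "G s \<le> F t" if "s \<in> D" "s \<le> t" for s t
    unfolding F_def using that bdd by (intro cSup_upper) auto
  have least: "F t \<le> G s" if "s \<in> D" "t \<le> s" for s t
    unfolding F_def using that mono by (intro cSup_least[OF nonempty]) (force simp: le_less)
  have "strict_mono F"
  proof
    fix s t :: real assume "s < t"
    then obtain s1 where s1: "s1 \<in> D" "s < s1" "s1 < t" using dense by blast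
    then obtain s2 where s2: "s2 \<in> D" "s1 < s2" "s2 < t" using dense by blast
    have "F s \<le> G s1" using least s1 by auto
    also have "\<dots> < G s2" using mono s1 s2 by auto
    also have "\<dots> \<le> F t" using upper s2 by auto
    finally show "F s < F t" .
  qed
  moreover have "continuous (at t) F" for t
    unfolding continuous_at_eps_delta
  proof (intro allI impI)
    fix e :: real assume e: "e > 0"
    obtain s1 where s1: "s1 \<in> D" "F t - e < G s1" "G s1 < F t" using dense_image[of "F t - e" "F t"] e by auto
    obtain s2 where s2: "s2 \<in> D" "F t < G s2" "G s2 < F t + e" using dense_image[of "F t" "F t + e"] e by auto
    have "s1 < t" "t < s2" using least[of s1 t] upper[of s2 t] s1 s2 by force+
    moreover have "dist (F x') (F t) < e" if "s1 < x'" "x' < s2" for x'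
      using upper[of s1 x'] least[of s2 x'] that s1 s2 by (auto simp: dist_real_def)
    ultimately show "\<exists>d>0. \<forall>x'. dist x' t < d \<longrightarrow> dist (F x') (F t) < e"
      by (intro exI[of _ "min (t - s1) (s2 - t)"]) (auto simp: dist_real_def)
  qed
  moreover have "F s = G s" if "s \<in> D" for s
    using upper[OF that] least[OF that] by (simp add: antisym)
  ultimately show ?thesis by (intro that[of F] continuous_at_imp_continuous_on) auto
qed

lemma continuous_eq_on_dense:
  fixes f g :: "real \<Rightarrow> real"
  assumes "continuous_on UNIV f" "continuous_on UNIV g"
    and dense: "\<And>a b. a < b \<Longrightarrow> \<exists>s\<in>D. a < s \<and> s < b"
    and eq: "\<And>s. s \<in> D \<Longrightarrow> f s = g s"
  shows "f t = g t"
proof (rule ccontr)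
  assume "f t \<noteq> g t"
  moreover have "open {x. f x \<noteq> g x}" using open_Collect_neq[OF assms(1,2)] .
  ultimately obtain e where e: "e > 0" "\<And>y. dist y t < e \<Longrightarrow> f y \<noteq> g y"
    unfolding open_dist by auto
  obtain s where "s \<in> D" "t - e < s" "s < t + e" using dense[of "t - e" "t + e"] e(1) by auto
  then show False using eq[of s] e(2)[of s] by (simp add: dist_real_def abs_less_iff)
qed

lemma shift_2pi_int:
  fixes F :: "real \<Rightarrow> real"
  assumes "\<And>t. F (t + 2 * pi) = F t + 2 * pi"
  shows "F (t + 2 * pi * of_int n) = F t + 2 * pi * of_int n"
proof -
  have nat: "F (t + 2 * pi * real m) = F t + 2 * pi * real m" for t m
  proof (induction m)
    case (Suc m)
    have "F (t + 2 * pi * real (Suc m)) = F ((t + 2 * pi * real m) + 2 * pi)"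
      by (simp add: algebra_simps)
    also have "\<dots> = F (t + 2 * pi * real m) + 2 * pi" by (rule assms)
    also have "\<dots> = F t + 2 * pi * real (Suc m)" using Suc by (simp add: algebra_simps)
    finally show ?case .
  qed simp
  show ?thesis
  proof (cases "n \<ge> 0")
    case True
    then show ?thesis using nat[of t "nat n"] by simp
  next
    case False
    then show ?thesis using nat[of "t + 2 * pi * of_int n" "nat (- n)"] by simp
  qed
qed

lemma continuous_on_S1_factor:
  fixes H :: "real \<Rightarrow> 'a::topological_space"
  assumes cont: "continuous_on UNIV H" and factor: "\<And>s t. cis s = cis t \<Longrightarrow> H s = H t"
  shows "continuous_on S1 (\<lambda>z. H (Arg2pi z))"
  unfolding continuous_on_eq_continuous_within
proof
  fix z :: complex assume z: "z \<in> S1"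
  have Hc: "continuous (at t) H" for t using cont by (simp add: continuous_on_eq_continuous_at)
  show "continuous (at z within S1) (\<lambda>z. H (Arg2pi z))"
  proof (cases "z \<in> \<real>\<^sub>\<ge>\<^sub>0")
    case False
    have "continuous (at z) (H \<circ> Arg2pi)"
      by (rule continuous_at_compose[OF continuous_at_Arg2pi[OF False] Hc])
    then show ?thesis unfolding o_def by (rule continuous_at_imp_continuous_within)
  next
    case True
    have "z = 1"
      using True z by (metis complex_nonneg_Reals_iff cmod_eq_Re abs_of_nonneg complex_eqI mem_sphere_0 one_complex.simps)
    then have "z \<notin> \<real>\<^sub>\<le>\<^sub>0" by simp
    then have "continuous (at z) (H \<circ> Arg)"
      by (rule continuous_at_compose[OF continuous_at_Arg Hc])
    then have "continuous (at z within S1) (H \<circ> Arg)"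
      by (rule continuous_at_imp_continuous_within)
    moreover have "(H \<circ> Arg) y = H (Arg2pi y)" if "y \<in> S1" for y
    proof -
      have "y \<noteq> 0" using that by auto
      then have "cis (Arg y) = sgn y" by (rule cis_Arg)
      also have "\<dots> = y" using that by (simp add: sgn_div_norm)
      finally show ?thesis using factor[of "Arg y" "Arg2pi y"] cis_Arg2pi[OF that] by simp
    qed
    ultimately show ?thesis
      by (rule continuous_transform_within_openin[OF _ openin_subtopology_self z])
  qed
qed
lemma circle_homeo_of_lift:
  fixes F :: "real \<Rightarrow> real"
  assumes cont: "continuous_on UNIV F" and mono: "strict_mono F"
    and shift: "\<And>t. F (t + 2 * pi) = F t + 2 * pi"
  obtains g where "circle_homeo g" "\<And>t. g (cis t) = cis (F t)"
proof -
  have F_int: "F (t + 2 * pi * of_int n) = F t + 2 * pi * of_int n" for t n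
    using shift_2pi_int[of F] shift by blast
  define g where "g z = cis (F (Arg2pi z))" for z
  have gcis: "g (cis t) = cis (F t)" for t
  proof -
    obtain n :: int where "Arg2pi (cis t) = t + 2 * pi * n"
      using cis_eq_cis_iff cis_Arg2pi[of "cis t"] by auto
    then show ?thesis unfolding g_def using F_int by simp
  qed
  have "continuous_on S1 g"
    unfolding g_def
  proof (rule continuous_on_S1_factor)
    show "continuous_on UNIV (\<lambda>t. cis (F t))" by (intro continuous_intros cont)
    fix s t :: real assume "cis s = cis t"
    then obtain n :: int where "s = t + 2 * pi * n" using cis_eq_cis_iff by blast
    then show "cis (F s) = cis (F t)" using F_int by simp
  qed
  moreover have "g ` S1 = S1"
  proof
    show "g ` S1 \<subseteq> S1" unfolding g_def by auto
    show "S1 \<subseteq> g ` S1"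
    proof
      fix w assume w: "w \<in> S1"
      obtain u where u: "F 0 \<le> u" "u < F 0 + 2 * pi" "w = cis u"
        by (rule S1_cis_window[OF w])
      then obtain t where "F t = u"
        using IVT'[of F 0 u "2 * pi"] continuous_on_subset[OF cont] shift[of 0] by force
      then show "w \<in> g ` S1" using gcis u by (intro image_eqI[of _ _ "cis t"]) auto
    qed
  qed
  moreover have "inj_on g S1"
  proof
    fix x y assume x: "x \<in> S1" and y: "y \<in> S1" and "g x = g y"
    then obtain n :: int where "F (Arg2pi x) = F (Arg2pi y) + 2 * pi * n"
      unfolding g_def using cis_eq_cis_iff by blast
    then have "Arg2pi x = Arg2pi y + 2 * pi * n"
      using F_int strict_mono_eq[OF mono] by metis
    then have "cis (Arg2pi x) = cis (Arg2pi y)" by simp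
    then show "x = y" using cis_Arg2pi x y by metis
  qed
  ultimately obtain g' where "homeomorphism S1 S1 g g'"
    using homeomorphism_compact[OF compact_sphere] by blast
  then show ?thesis using that gcis unfolding circle_homeo_def by blast
qed

lemma circle_homeo_of_dense_lift:
  fixes D :: "real set" and G :: "real \<Rightarrow> real"
  assumes dense: "\<And>a b. a < b \<Longrightarrow> \<exists>s\<in>D. a < s \<and> s < b"
    and mono: "\<And>s t. s \<in> D \<Longrightarrow> t \<in> D \<Longrightarrow> s < t \<Longrightarrow> G s < G t"
    and dense_image: "\<And>a b. a < b \<Longrightarrow> \<exists>s\<in>D. a < G s \<and> G s < b"
    and periodic: "\<And>s. s \<in> D \<Longrightarrow> s + 2 * pi \<in> D"
    and shift: "\<And>s. s \<in> D \<Longrightarrow> G (s + 2 * pi) = G s + 2 * pi"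
  obtains g where "circle_homeo g" "\<And>s. s \<in> D \<Longrightarrow> g (cis s) = cis (G s)"
proof -
  obtain F where F: "continuous_on UNIV F" "strict_mono F" "\<And>s. s \<in> D \<Longrightarrow> F s = G s"
    using strict_mono_dense_extension[OF dense mono dense_image] by blast
  have "F (t + 2 * pi) - 2 * pi = F t" for t
  proof (rule continuous_eq_on_dense[OF _ F(1) dense])
    show "continuous_on UNIV (\<lambda>t. F (t + 2 * pi) - 2 * pi)"
      by (intro continuous_intros continuous_on_compose2[OF F(1)]) auto
  qed (use F(3) periodic shift in auto)
  then obtain g where "circle_homeo g" "\<And>t. g (cis t) = cis (F t)"
    using circle_homeo_of_lift[OF F(1,2)] by (metis add_diff_cancel_right' diff_add_cancel)
  then show ?thesis using that F(3) by auto
qed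

lemma ccw_angle_cis:
  "ccw_angle (cis a) (cis s) = s - a - 2 * pi * \<lfloor>(s - a) / (2 * pi)\<rfloor>"
proof -
  define x where "x = s - a - 2 * pi * \<lfloor>(s - a) / (2 * pi)\<rfloor>"
  have "0 \<le> x" "x < 2 * pi"
    using floor_divide_lower[of "2 * pi" "s - a"] floor_divide_upper[of "2 * pi" "s - a"]
    unfolding x_def by (simp_all add: field_simps)
  moreover have "cis s / cis a = cis x" unfolding x_def by (simp add: cis_divide)
  ultimately show ?thesis unfolding ccw_angle_def x_def[symmetric] by (simp add: Arg2pi_cis)
qed

lemma ccw_angle_less_image:
  assumes U: "U \<subseteq> S1" "f ` U \<subseteq> S1" and inj: "inj_on f U"
    and pres: "\<And>x y z. x \<in> U \<Longrightarrow> y \<in> U \<Longrightarrow> z \<in> U \<Longrightarrow> ccw x y z \<Longrightarrow> ccw (f x) (f y) (f z)"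
    and in_U: "z0 \<in> U" "x \<in> U" "y \<in> U" and less: "ccw_angle z0 x < ccw_angle z0 y"
  shows "ccw_angle (f z0) (f x) < ccw_angle (f z0) (f y)"
proof -
  have S: "z0 \<in> S1" "x \<in> S1" "y \<in> S1" "f z0 \<in> S1" "f x \<in> S1" "f y \<in> S1" using U in_U by auto
  have "y \<noteq> z0" using less ccw_angle_bounds(1)[of z0 x] ccw_angle_eq_0_iff[OF S(1,3)] by auto
  then have fy: "f y \<noteq> f z0" using inj in_U by (auto dest: inj_onD)
  show ?thesis
  proof (cases "x = z0")
    case True
    then show ?thesis using fy ccw_angle_eq_0_iff[OF S(4,6)] ccw_angle_eq_0_iff[OF S(4,4)]
        ccw_angle_bounds(1)[of "f z0" "f y"] by auto
  next
    case False
    then have "ccw z0 x y" using less ccw_iff_ccw_angle_less S \<open>y \<noteq> z0\<close> by blast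
    then have "ccw (f z0) (f x) (f y)" using pres in_U by blast
    moreover have "f x \<noteq> f z0" using False inj in_U by (auto dest: inj_onD)
    ultimately show ?thesis using ccw_iff_ccw_angle_less S fy by blast
  qed
qed

lemma lift_dense_image:
  assumes V: "S1 \<subseteq> closure V" "V \<subseteq> S1"
    and lift: "\<And>v. v \<in> V \<Longrightarrow> \<exists>s\<in>D. cis (G s) = v"
    and D: "\<And>s n. s \<in> D \<Longrightarrow> s + 2 * pi * of_int n \<in> D"
    and shift: "\<And>t. G (t + 2 * pi) = G t + 2 * pi"
    and "a < b"
  shows "\<exists>s\<in>D. a < G s \<and> G s < b"
proof -
  obtain \<tau> where \<tau>: "a < \<tau>" "\<tau> < b" "cis \<tau> \<in> V" by (rule dense_S1_cis[OF V \<open>a < b\<close>])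
  obtain s where s: "s \<in> D" "cis (G s) = cis \<tau>" using lift[OF \<tau>(3)] by blast
  then obtain n :: int where "G s = \<tau> + 2 * pi * n" using cis_eq_cis_iff by blast
  then have "G (s + 2 * pi * of_int (- n)) = \<tau>" using shift_2pi_int[of G s "- n"] shift by simp
  then show ?thesis using D[OF s(1), of "- n"] \<tau> by blast
qed

lemma ccw_preserving_extends_to_homeo:
  assumes U: "U \<subseteq> S1" "S1 \<subseteq> closure U" and V: "f ` U \<subseteq> S1" "S1 \<subseteq> closure (f ` U)"
    and inj: "inj_on f U"
    and pres: "\<And>x y z. x \<in> U \<Longrightarrow> y \<in> U \<Longrightarrow> z \<in> U \<Longrightarrow> ccw x y z \<Longrightarrow> ccw (f x) (f y) (f z)"
  obtains g where "circle_homeo g" "\<And>z. z \<in> U \<Longrightarrow> g z = f z"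
proof -
  obtain al where al: "cis al \<in> U" by (rule dense_S1_cis[OF U(2,1), of 0 1]) auto
  define z0 where "z0 = cis al"
  obtain be where be: "f z0 = cis be" using S1_cis_window V(1) al unfolding z0_def by blast
  define D where "D = {s. cis s \<in> U}"
  define k where "k s = \<lfloor>(s - al) / (2 * pi)\<rfloor>" for s
  \<comment> \<open>A lift of \<open>f\<close>: the angle of \<open>f (cis s)\<close> seen from \<open>f z0\<close>, plus the number of full
    turns that \<open>s\<close> has made past \<open>al\<close>.\<close>
  define G where "G s = be + ccw_angle (f z0) (f (cis s)) + 2 * pi * k s" for s
  have angle_z0: "ccw_angle z0 (cis s) = s - al - 2 * pi * k s" for s
    unfolding z0_def k_def by (rule ccw_angle_cis)
  have cis_G: "cis (G s) = f (cis s)" if "s \<in> D" for s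
    using cis_add_ccw_angle[OF be, of "f (cis s)"] that V(1) unfolding G_def D_def by auto
  have G_shift: "G (s + 2 * pi) = G s + 2 * pi" for s
  proof -
    have "(s + 2 * pi - al) / (2 * pi) = (s - al) / (2 * pi) + 1" by (simp add: field_simps)
    then show ?thesis unfolding G_def k_def cis_add_2pi by (simp add: algebra_simps)
  qed
  have D_dense: "\<exists>s\<in>D. a < s \<and> s < b" if "a < b" for a b
    using dense_S1_cis[OF U(2,1) that] unfolding D_def by blast
  have G_mono: "G s < G t" if st: "s \<in> D" "t \<in> D" "s < t" for s t
  proof -
    have "k s \<le> k t" unfolding k_def using st by (intro floor_mono divide_right_mono) auto
    then consider "k s < k t" | "k s = k t" by linarith
    then show ?thesis
    proof cases
      case 1
      then have "2 * pi * (k s + 1) \<le> 2 * pi * k t" by simp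
      moreover have "ccw_angle (f z0) (f (cis s)) < 2 * pi" "0 \<le> ccw_angle (f z0) (f (cis t))"
        by (rule ccw_angle_bounds)+
      ultimately show ?thesis unfolding G_def by (simp add: algebra_simps)
    next
      case 2
      then have "ccw_angle z0 (cis s) < ccw_angle z0 (cis t)" using angle_z0 st by simp
      then have "ccw_angle (f z0) (f (cis s)) < ccw_angle (f z0) (f (cis t))"
        using st al unfolding D_def z0_def
        by (intro ccw_angle_less_image[OF U(1) V(1) inj pres]) auto
      then show ?thesis unfolding G_def using 2 by simp
    qed
  qed
  have G_dense_image: "\<exists>s\<in>D. a < G s \<and> G s < b" if "a < b" for a b
  proof (rule lift_dense_image[where D = D and G = G, OF V(2,1) _ _ G_shift that])
    fix v assume "v \<in> f ` U"
    then obtain s where "cis s \<in> U" "v = f (cis s)" using U(1) S1_cis_window by (metis image_iff subsetD)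
    then show "\<exists>s\<in>D. cis (G s) = v" using cis_G unfolding D_def by auto
  qed (simp add: D_def)
  obtain g where g: "circle_homeo g" "\<And>s. s \<in> D \<Longrightarrow> g (cis s) = cis (G s)"
    by (rule circle_homeo_of_dense_lift[OF D_dense G_mono G_dense_image _ G_shift])
      (auto simp: D_def)
  have "g z = f z" if z: "z \<in> U" for z
  proof -
    obtain s where "z = cis s" using S1_cis_window U(1) z by blast
    then show ?thesis using g(2) cis_G z unfolding D_def by auto
  qed
  then show ?thesis using that g(1) by blast
qed

section \<open>The relation \<open>cyc4\<close>\<close>

definition affine_interp :: "real \<Rightarrow> real \<Rightarrow> real \<Rightarrow> real \<Rightarrow> real \<Rightarrow> real" where
  "affine_interp a b c d t = c + (t - a) * (d - c) / (b - a)"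

lemma affine_interp_left [simp]: "affine_interp a b c d a = c"
  unfolding affine_interp_def by simp

lemma strict_mono_affine_interp:
  assumes "a < b" "c < d"
  shows "strict_mono (affine_interp a b c d)"
proof
  fix s t :: real assume "s < t"
  then have "(s - a) * (d - c) / (b - a) < (t - a) * (d - c) / (b - a)"
    using assms by (intro divide_strict_right_mono mult_strict_right_mono) auto
  then show "affine_interp a b c d s < affine_interp a b c d t" unfolding affine_interp_def by simp
qed

lemma affine_interp_inverse:
  assumes "a < b" "c < d"
  shows "affine_interp a b c d (affine_interp c d a b u) = u"
proof -
  have "(u - c) * (b - a) / (d - c) * (d - c) / (b - a) = u - c" using assms by simp
  then show ?thesis unfolding affine_interp_def by simp
qed

lemma affine_interp_image:
  assumes "a < b" "c < d"
  shows "affine_interp a b c d ` {a..<b} = {c..<d}" "affine_interp a b c d ` {a<..<b} = {c<..<d}"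
proof -
  let ?f = "affine_interp a b c d" and ?g = "affine_interp c d a b"
  have f: "?f s \<le> ?f t \<longleftrightarrow> s \<le> t" "?f s < ?f t \<longleftrightarrow> s < t" for s t
    using strict_mono_less_eq strict_mono_less strict_mono_affine_interp[OF assms] by blast+
  have g: "?g s \<le> ?g t \<longleftrightarrow> s \<le> t" "?g s < ?g t \<longleftrightarrow> s < t" for s t
    using strict_mono_less_eq strict_mono_less strict_mono_affine_interp[OF assms(2,1)] by blast+
  have ends: "?f a = c" "?f b = d" "?g c = a" "?g d = b"
    using assms unfolding affine_interp_def by simp_all
  have inv: "?f (?g u) = u" for u by (rule affine_interp_inverse[OF assms])
  show "?f ` {a..<b} = {c..<d}"
  proof (intro equalityI subsetI)
    show "x \<in> {c..<d}" if x: "x \<in> ?f ` {a..<b}" for x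
    proof -
      obtain t where "a \<le> t" "t < b" "x = ?f t" using x by auto
      then show ?thesis using f(1)[of a t] f(2)[of t b] ends by auto
    qed
    show "x \<in> ?f ` {a..<b}" if "x \<in> {c..<d}" for x
      using that g[of c x] g[of x d] ends inv[of x] by (intro image_eqI[of _ _ "?g x"]) auto
  qed
  show "?f ` {a<..<b} = {c<..<d}"
  proof (intro equalityI subsetI)
    show "x \<in> {c<..<d}" if x: "x \<in> ?f ` {a<..<b}" for x
    proof -
      obtain t where "a < t" "t < b" "x = ?f t" using x by auto
      then show ?thesis using f(2)[of a t] f(2)[of t b] ends by auto
    qed
    show "x \<in> ?f ` {a<..<b}" if "x \<in> {c<..<d}" for x
      using that g[of c x] g[of x d] ends inv[of x] by (intro image_eqI[of _ _ "?g x"]) auto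
  qed
qed

lemma strict_mono_on_onto_glue:
  fixes P Q :: "'a::linorder \<Rightarrow> 'b::linorder"
  assumes P: "strict_mono_on {a..<m} P" "P ` {a..<m} = {c..<e}"
    and Q: "strict_mono_on {m..<b} Q" "Q ` {m..<b} = {e..<d}"
    and "a < m" "m < b"
  shows "strict_mono_on {a..<b} (\<lambda>t. if t < m then P t else Q t)"
    "(\<lambda>t. if t < m then P t else Q t) ` {a..<b} = {c..<d}"
proof -
  let ?R = "\<lambda>t. if t < m then P t else Q t"
  have P_in: "c \<le> P t \<and> P t < e" if "a \<le> t" "t < m" for t using P(2) that by auto
  have Q_in: "e \<le> Q t \<and> Q t < d" if "m \<le> t" "t < b" for t using Q(2) that by auto
  have "c < e" using P_in[of a] assms(5) le_less_trans by blast
  have "e < d" using Q_in[of m] assms(6) le_less_trans by blast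
  show "strict_mono_on {a..<b} ?R"
  proof (rule strict_mono_onI)
    fix r s assume "r \<in> {a..<b}" "s \<in> {a..<b}" "r < s"
    then show "?R r < ?R s"
      using strict_mono_onD[OF P(1), of r s] strict_mono_onD[OF Q(1), of r s] P_in[of r] Q_in[of s]
      by (auto simp: not_less intro: less_le_trans)
  qed
  show "?R ` {a..<b} = {c..<d}"
  proof (intro equalityI subsetI)
    show "y \<in> {c..<d}" if "y \<in> ?R ` {a..<b}" for y
      using that P_in Q_in \<open>c < e\<close> \<open>e < d\<close> by (fastforce simp: not_less intro: less_le_trans less_imp_le)
    show "y \<in> ?R ` {a..<b}" if y: "y \<in> {c..<d}" for y
    proof (cases "y < e")
      case True
      then obtain t where "t \<in> {a..<m}" "y = P t" using P(2) y by (metis atLeastLessThan_iff imageE)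
      then show ?thesis using assms(6) by (intro image_eqI[of _ _ t]) auto
    next
      case False
      then obtain t where "t \<in> {m..<b}" "y = Q t" using Q(2) y by (metis atLeastLessThan_iff imageE not_less)
      then show ?thesis using assms(5) by (intro image_eqI[of _ _ t]) auto
    qed
  qed
qed

lemma cyclic3_strict_mono_on:
  assumes "strict_mono_on A P" "a \<in> A" "b \<in> A" "c \<in> A" "cyclic3 a b c"
  shows "cyclic3 (P a) (P b) (P c)"
  using assms unfolding cyclic3_def by (meson strict_mono_onD)

lemma circle_homeo_of_angle_map:
  assumes mono: "strict_mono_on {0..<2 * pi} P" and onto: "P ` {0..<2 * pi} = {c..<c + 2 * pi}"
  obtains g where "circle_homeo g" "\<And>t. 0 \<le> t \<Longrightarrow> t < 2 * pi \<Longrightarrow> g (cis t) = cis (P t)"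
proof -
  define f where "f z = cis (P (Arg2pi z))" for z
  have Arg: "0 \<le> Arg2pi z" "Arg2pi z < 2 * pi" for z using Arg2pi by auto
  have P_bounds: "c \<le> P (Arg2pi z)" "P (Arg2pi z) < c + 2 * pi" for z
    using onto Arg[of z] by auto
  have f_surj: "S1 \<subseteq> f ` S1"
  proof
    fix w assume "w \<in> S1"
    then obtain y where y: "c \<le> y" "y < c + 2 * pi" "w = cis y" by (rule S1_cis_window)
    then have "y \<in> P ` {0..<2 * pi}" using onto by simp
    then obtain r where r: "0 \<le> r" "r < 2 * pi" "P r = y" by auto
    then have "f (cis r) = w" unfolding f_def using Arg2pi_cis y(3) by simp
    then show "w \<in> f ` S1" by (intro image_eqI[of _ _ "cis r"]) auto
  qed
  have f_inj: "inj_on f S1"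
  proof
    fix x y assume x: "x \<in> S1" and y: "y \<in> S1" and "f x = f y"
    then have "P (Arg2pi x) = P (Arg2pi y)"
      unfolding f_def using cis_eq_cis_window_iff[of c] P_bounds by blast
    then have "Arg2pi y = Arg2pi x" using strict_mono_on_eqD[OF mono] Arg by simp
    then show "x = y" using cis_Arg2pi[OF x] cis_Arg2pi[OF y] by simp
  qed
  have f_ccw: "ccw (f x) (f y) (f z)" if S: "x \<in> S1" "y \<in> S1" "z \<in> S1" and "ccw x y z" for x y z
  proof -
    have "ccw (cis (Arg2pi x)) (cis (Arg2pi y)) (cis (Arg2pi z))"
      using that cis_Arg2pi by simp
    then have "cyclic3 (Arg2pi x) (Arg2pi y) (Arg2pi z)"
      using ccw_cis_window_iff[of 0 "Arg2pi x" "Arg2pi y" "Arg2pi z"] Arg by simp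
    then have "cyclic3 (P (Arg2pi x)) (P (Arg2pi y)) (P (Arg2pi z))"
      using cyclic3_strict_mono_on[OF mono] Arg by simp
    then show ?thesis
      unfolding f_def using ccw_cis_window_iff[of c] P_bounds by simp
  qed
  have "f ` S1 \<subseteq> S1" unfolding f_def by auto
  then obtain g where g: "circle_homeo g" "\<And>z. z \<in> S1 \<Longrightarrow> g z = f z"
    using ccw_preserving_extends_to_homeo[OF order_refl closure_subset _ _ f_inj f_ccw] f_surj
      closure_subset[of "f ` S1"] by blast
  show ?thesis
  proof (rule that[OF g(1)])
    fix t :: real assume "0 \<le> t" "t < 2 * pi"
    then show "g (cis t) = cis (P t)" using g(2) Arg2pi_cis unfolding f_def by simp
  qed
qed

lemma cis_3pi2: "cis (3 * pi / 2) = - \<i>"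
proof -
  have "cis (3 * pi / 2) = cis (pi + pi / 2)" by simp
  also have "\<dots> = cis pi * cis (pi / 2)" by (rule cis_mult[symmetric])
  finally show ?thesis by simp
qed

lemma circle_homeo_four_points:
  assumes "y0 < y1" "y1 < y2" "y2 < y3" "y3 < y0 + 2 * pi"
  obtains g where "circle_homeo g" "g 1 = cis y0" "g \<i> = cis y1" "g (-1) = cis y2" "g (- \<i>) = cis y3"
proof -
  have piece: "strict_mono_on {a..<b} (affine_interp a b c d)" "affine_interp a b c d ` {a..<b} = {c..<d}"
    if "a < b" "c < d" for a b c d
    using monotone_on_subset[OF strict_mono_affine_interp[OF that]] affine_interp_image(1)[OF that]
    by auto
  have pi: "0 < pi" by simp
  define P where "P =
    (\<lambda>t. if t < pi / 2 then affine_interp 0 (pi / 2) y0 y1 t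
     else (\<lambda>t. if t < pi then affine_interp (pi / 2) pi y1 y2 t
     else (\<lambda>t. if t < 3 * pi / 2 then affine_interp pi (3 * pi / 2) y2 y3 t
     else affine_interp (3 * pi / 2) (2 * pi) y3 (y0 + 2 * pi) t) t) t)"
  note glue = strict_mono_on_onto_glue
  note L1 = piece[of 0 "pi / 2" y0 y1] and L2 = piece[of "pi / 2" pi y1 y2]
    and L3 = piece[of pi "3 * pi / 2" y2 y3] and L4 = piece[of "3 * pi / 2" "2 * pi" y3 "y0 + 2 * pi"]
  note G3 = glue[OF L3 L4] and G2 = glue[OF L2 G3] and G1 = glue[OF L1 G2]
  have P: "strict_mono_on {0..<2 * pi} P" "P ` {0..<2 * pi} = {y0..<y0 + 2 * pi}"
    unfolding P_def using G1 assms pi by auto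
  obtain g where g: "circle_homeo g" "\<And>t. 0 \<le> t \<Longrightarrow> t < 2 * pi \<Longrightarrow> g (cis t) = cis (P t)"
    using circle_homeo_of_angle_map[OF P] by blast
  have "g 1 = cis y0" using g(2)[of 0] unfolding P_def by simp
  moreover have "g \<i> = cis y1" using g(2)[of "pi / 2"] unfolding P_def by simp
  moreover have "g (-1) = cis y2" using g(2)[of pi] unfolding P_def by simp
  moreover have "g (- \<i>) = cis y3" using g(2)[of "3 * pi / 2"] cis_3pi2 unfolding P_def by simp
  ultimately show ?thesis using that g(1) by blast
qed

lemma circle_homeo_cnj: "circle_homeo cnj"
proof -
  have "cnj ` S1 = S1" by (auto intro!: image_eqI[of _ cnj "cnj _"])
  then show ?thesis unfolding circle_homeo_def homeomorphism_def by (intro exI[of _ cnj]) auto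
qed

lemma circle_homeo_comp: "circle_homeo g \<Longrightarrow> circle_homeo h \<Longrightarrow> circle_homeo (h \<circ> g)"
  unfolding circle_homeo_def using homeomorphism_compose by blast

lemma i_cube [simp]: "\<i> ^ 3 = - \<i>"
  by (simp add: power3_eq_cube)

lemma ccw_ccw_imp_homeo:
  assumes "ccw x1 x2 x3" "ccw x1 x3 x4"
  obtains g where "circle_homeo g" "g \<i> = x1" "g (-1) = x2" "g (- \<i>) = x3" "g 1 = x4"
proof -
  obtain s1 where s1: "x1 = cis s1" using S1_cis_window ccw_in_S1[OF assms(1)] by blast
  obtain t2 t3 where a: "x2 = cis t2" "x3 = cis t3" "s1 < t2" "t2 < t3" "t3 < s1 + 2 * pi"
    by (rule ccw_from[OF assms(1) s1])
  obtain t3' t4 where b: "x3 = cis t3'" "x4 = cis t4" "s1 < t3'" "t3' < t4" "t4 < s1 + 2 * pi"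
    by (rule ccw_from[OF assms(2) s1])
  have "t3' = t3" using cis_eq_cis_window_iff[of s1 t3' t3] a b by auto
  then obtain g where "circle_homeo g" "g 1 = cis (t4 - 2 * pi)" "g \<i> = cis s1"
    "g (-1) = cis t2" "g (- \<i>) = cis t3"
    using circle_homeo_four_points[of "t4 - 2 * pi" s1 t2 t3] a b by auto
  then show ?thesis using that s1 a b by simp
qed

lemma circ_ordered_imp_cyc4:
  assumes "circ_ordered x1 x2 x3 x4"
  shows "cyc4 x1 x2 x3 x4"
proof -
  obtain g where g: "circle_homeo g" "g \<i> = x1" "g (-1) = x2" "g (- \<i>) = x3" "g 1 = x4"
  proof (cases "ccw x1 x2 x3 \<and> ccw x1 x3 x4")
    case True
    then show ?thesis using ccw_ccw_imp_homeo that by blast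
  next
    case False
    then have "ccw (cnj x1) (cnj x2) (cnj x3)" "ccw (cnj x1) (cnj x3) (cnj x4)"
      using assms ccw_cnj unfolding circ_ordered_def by auto
    then obtain g where "circle_homeo g" "g \<i> = cnj x1" "g (-1) = cnj x2" "g (- \<i>) = cnj x3" "g 1 = cnj x4"
      by (rule ccw_ccw_imp_homeo)
    then show ?thesis using that[of "cnj \<circ> g"] circle_homeo_comp circle_homeo_cnj by auto
  qed
  then show ?thesis using circ_ordered_distinct[OF assms] unfolding cyc4_def by auto
qed

lemma separates_i: "separates \<i> (- \<i>) (-1) 1"
proof -
  have "ccw \<i> (-1) (- \<i>)" unfolding ccw_def
    by (intro exI[of _ "pi / 2"] exI[of _ pi] exI[of _ "3 * pi / 2"]) (auto simp: cis_3pi2)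
  moreover have "ccw \<i> (- \<i>) 1" unfolding ccw_def
    by (intro exI[of _ "pi / 2"] exI[of _ "3 * pi / 2"] exI[of _ "2 * pi"]) (auto simp: cis_3pi2)
  ultimately show ?thesis unfolding separates_def circ_ordered_def by blast
qed

lemma cyc4_iff_circ_ordered: "cyc4 x1 x2 x3 x4 \<longleftrightarrow> circ_ordered x1 x2 x3 x4"
proof
  assume "cyc4 x1 x2 x3 x4"
  then obtain g where "circle_homeo g" "g \<i> = x1" "g (-1) = x2" "g (- \<i>) = x3" "g 1 = x4"
    unfolding cyc4_def by auto
  then show "circ_ordered x1 x2 x3 x4"
    using circle_homeo_separates[OF _ separates_i] unfolding separates_def by metis
qed (rule circ_ordered_imp_cyc4)

lemma set_cyc4_connected_between:
  assumes S: "J1 \<subseteq> S1" "J2 \<subseteq> S1" "J3 \<subseteq> S1" "J4 \<subseteq> S1"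
    and conn: "connected J3" "connected J4" and cyc: "set_cyc4 J1 J2 J3 J4"
  obtains T where "connected T" "J3 \<union> J4 \<subseteq> T" "T \<subseteq> S1 - (J1 \<union> J2)"
proof -
  have disj: "J1 \<inter> J3 = {}" "J2 \<inter> J3 = {}" "J1 \<inter> J4 = {}" "J2 \<inter> J4 = {}"
    using cyc unfolding set_cyc4_def pairwise_def disjnt_def by auto
  have ord: "circ_ordered y1 y2 y3 y4" if "y1 \<in> J1" "y2 \<in> J2" "y3 \<in> J3" "y4 \<in> J4" for y1 y2 y3 y4
    using cyc that unfolding set_cyc4_def cyc4_iff_circ_ordered by blast
  obtain x1 x2 x3 x4 where x: "x1 \<in> J1" "x2 \<in> J2" "x3 \<in> J3" "x4 \<in> J4"
    using cyc unfolding set_cyc4_def by blast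
  note x_ord = ord[OF x]
  have xS: "x1 \<in> S1" "x2 \<in> S1" "x3 \<in> S1" "x4 \<in> S1" using x S by auto
  have "distinct [x3, x4, x1, x2]" using circ_ordered_distinct(1)[OF x_ord] by auto
  moreover have "\<not> separates x3 x4 x1 x2"
  proof
    assume "separates x3 x4 x1 x2"
    then have "separates x1 x2 x3 x4" by (rule separates_commute(3))
    moreover have "\<not> separates x1 x2 x3 x4"
      using x_ord unfolding separates_def[symmetric] by (rule separates_not_separates)
    ultimately show False by contradiction
  qed
  ultimately obtain \<Gamma> where \<Gamma>: "connected \<Gamma>" "x3 \<in> \<Gamma>" "x4 \<in> \<Gamma>" "\<Gamma> \<subseteq> S1 - {x1, x2}"
    "\<And>y. y \<in> \<Gamma> - {x3, x4} \<Longrightarrow> separates x3 x4 x1 y \<and> separates x3 x4 x2 y"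
    using arc_avoiding[OF xS(3,4,1,2)] by blast
  have "y \<notin> J1 \<union> J2" if y: "y \<in> \<Gamma>" for y
  proof
    assume y12: "y \<in> J1 \<union> J2"
    then have "y \<noteq> x3" "y \<noteq> x4" using x disj by auto
    then have sep: "separates x3 x4 x1 y" "separates x3 x4 x2 y" using \<Gamma>(5) y by auto
    show False
    proof (cases "y \<in> J1")
      case True
      then have "separates y x3 x2 x4" using ord[OF _ x(2-4)] unfolding separates_def by blast
      then have "\<not> separates y x2 x3 x4" by (rule separates_not_separates)
      moreover have "separates y x2 x3 x4"
        using separates_commute(1)[OF separates_commute(3)[OF sep(2)]] .
      ultimately show False by contradiction
    next
      case False
      then have "separates x1 x3 y x4" using y12 ord[OF x(1) _ x(3,4)] unfolding separates_def by blast
      then have "\<not> separates x1 y x3 x4" by (rule separates_not_separates)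
      then show False using separates_commute(3)[OF sep(1)] by contradiction
    qed
  qed
  moreover have "connected (J3 \<union> \<Gamma> \<union> J4)"
    using connected_Un[OF connected_Un[OF conn(1) \<Gamma>(1)] conn(2)] x(3,4) \<Gamma>(2,3) by blast
  ultimately show ?thesis using that[of "J3 \<union> \<Gamma> \<union> J4"] \<Gamma>(4) S disj by blast
qed

lemma circle_homeo_set_cyc4_component:
  assumes g: "circle_homeo g" and S: "J1 \<subseteq> S1" "J2 \<subseteq> S1" "J3 \<subseteq> S1" "J4 \<subseteq> S1"
    and conn: "connected J3" "connected J4" and cyc: "set_cyc4 J1 J2 J3 J4"
  shows "\<exists>C\<in>components (S1 - (g ` J1 \<union> g ` J2)). g ` J3 \<subseteq> C \<and> g ` J4 \<subseteq> C"
proof -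
  obtain T where T: "connected T" "J3 \<union> J4 \<subseteq> T" "T \<subseteq> S1 - (J1 \<union> J2)"
    by (rule set_cyc4_connected_between[OF S conn cyc])
  obtain g' where "homeomorphism S1 S1 g g'" using g unfolding circle_homeo_def by blast
  then have g': "continuous_on S1 g" "g ` S1 = S1" "\<And>x. x \<in> S1 \<Longrightarrow> g' (g x) = x"
    unfolding homeomorphism_def by auto
  have conn_gT: "connected (g ` T)"
    using T(1,3) by (intro connected_continuous_image continuous_on_subset[OF g'(1)]) auto
  have sub: "g ` T \<subseteq> S1 - (g ` J1 \<union> g ` J2)"
  proof
    fix w assume "w \<in> g ` T"
    then obtain t where t: "t \<in> T" "w = g t" by blast
    then have tS: "t \<in> S1" "t \<notin> J1 \<union> J2" using T(3) by auto
    have "w \<notin> g ` (J1 \<union> J2)"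
    proof
      assume "w \<in> g ` (J1 \<union> J2)"
      then obtain y where "y \<in> J1 \<union> J2" "w = g y" by blast
      then have "y = t" using g'(3) tS(1) t(2) S by (metis Un_iff subsetD)
      then show False using tS(2) \<open>y \<in> J1 \<union> J2\<close> by blast
    qed
    then show "w \<in> S1 - (g ` J1 \<union> g ` J2)" using t tS(1) g'(2) by auto
  qed
  obtain x3 where "x3 \<in> J3" using cyc unfolding set_cyc4_def by blast
  then have "S1 - (g ` J1 \<union> g ` J2) \<noteq> {}" using sub T(2) by blast
  then obtain C where "C \<in> components (S1 - (g ` J1 \<union> g ` J2))" "g ` T \<subseteq> C"
    using exists_component_superset[OF sub _ conn_gT] by blast
  then show ?thesis using T(2) by blast
qed

section \<open>Gluing maps of arcs and points\<close>

definition arc_ends :: "complex set \<Rightarrow> real \<times> real" where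
  "arc_ends J = (SOME (a, b). a < b \<and> b - a < 2 * pi \<and> J = cis ` {a<..<b})"

definition arc_start :: "complex set \<Rightarrow> real" where
  "arc_start J = fst (arc_ends J)"

definition arc_end :: "complex set \<Rightarrow> real" where
  "arc_end J = snd (arc_ends J)"

definition arc_param :: "complex set \<Rightarrow> complex \<Rightarrow> real" where
  "arc_param J z = (THE t. arc_start J < t \<and> t < arc_end J \<and> cis t = z)"

lemma open_arc_ends:
  assumes "open_arc J"
  shows "arc_start J < arc_end J" "arc_end J - arc_start J < 2 * pi"
    "J = cis ` {arc_start J<..<arc_end J}"
proof -
  have "\<exists>p. case p of (a, b) \<Rightarrow> a < b \<and> b - a < 2 * pi \<and> J = cis ` {a<..<b}"
    using assms unfolding open_arc_def by auto
  then have "case arc_ends J of (a, b) \<Rightarrow> a < b \<and> b - a < 2 * pi \<and> J = cis ` {a<..<b}"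
    unfolding arc_ends_def by (rule someI_ex)
  then show "arc_start J < arc_end J" "arc_end J - arc_start J < 2 * pi"
    "J = cis ` {arc_start J<..<arc_end J}"
    unfolding arc_start_def arc_end_def by (auto split: prod.splits)
qed

lemma connected_open_arc: "open_arc J \<Longrightarrow> connected J"
  unfolding open_arc_def by (auto intro!: connected_continuous_image continuous_intros)

lemma arc_param:
  assumes "open_arc J" "z \<in> J"
  shows "arc_start J < arc_param J z" "arc_param J z < arc_end J" "cis (arc_param J z) = z"
proof -
  note ends = open_arc_ends[OF assms(1)]
  have "z \<in> cis ` {arc_start J<..<arc_end J}" using assms(2) ends(3) by simp
  then obtain t where t: "arc_start J < t" "t < arc_end J" "cis t = z" by auto
  have "arc_start J < arc_param J z \<and> arc_param J z < arc_end J \<and> cis (arc_param J z) = z"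
    unfolding arc_param_def
  proof (rule theI[of _ t])
    fix s assume "arc_start J < s \<and> s < arc_end J \<and> cis s = z"
    then show "s = t" using t ends(2) cis_eq_cis_window_iff[of "arc_start J" s t] by auto
  qed (use t in auto)
  then show "arc_start J < arc_param J z" "arc_param J z < arc_end J" "cis (arc_param J z) = z"
    by auto
qed

lemma arc_param_cis:
  assumes "open_arc J" "arc_start J < t" "t < arc_end J"
  shows "arc_param J (cis t) = t"
proof -
  note ends = open_arc_ends[OF assms(1)]
  have "cis t \<in> J" using assms(2,3) ends(3) by auto
  note p = arc_param[OF assms(1) this]
  show ?thesis
    using p assms(2,3) ends(2) cis_eq_cis_window_iff[of "arc_start J" "arc_param J (cis t)" t] by auto
qed

lemma ccw_arc_outside_iff:
  assumes J: "open_arc J" and xy: "x \<in> J" "y \<in> J" and z: "z \<in> S1" "z \<notin> J"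
  shows "ccw x y z \<longleftrightarrow> arc_param J x < arc_param J y"
proof -
  note ends = open_arc_ends[OF J] and px = arc_param[OF J xy(1)] and py = arc_param[OF J xy(2)]
  obtain u where u: "arc_start J < u" "u \<le> arc_start J + 2 * pi" "z = cis u"
  proof -
    obtain u where u: "arc_start J \<le> u" "u < arc_start J + 2 * pi" "z = cis u"
      by (rule S1_cis_window[OF z(1)])
    show ?thesis
    proof (cases "u = arc_start J")
      case True
      then show ?thesis using u by (intro that[of "u + 2 * pi"]) auto
    next
      case False
      then show ?thesis using u by (intro that[of u]) auto
    qed
  qed
  have "arc_end J \<le> u" using z(2) u ends(3) by (metis greaterThanLessThan_iff image_eqI not_le)
  have "ccw x y z \<longleftrightarrow> ccw (cis (arc_param J x)) (cis (arc_param J y)) (cis u)"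
    using px py u by simp
  also have "\<dots> \<longleftrightarrow> cyclic3 (arc_param J x) (arc_param J y) u"
    using px py u \<open>arc_end J \<le> u\<close> ends(2)
    by (intro ccw_cis_window_iff[of "min (arc_param J x) (arc_param J y)"]) auto
  also have "\<dots> \<longleftrightarrow> arc_param J x < arc_param J y"
    unfolding cyclic3_def using px py \<open>arc_end J \<le> u\<close> by auto
  finally show ?thesis .
qed

lemma ccw_arc_iff:
  assumes J: "open_arc J" and xyz: "x \<in> J" "y \<in> J" "z \<in> J"
  shows "ccw x y z \<longleftrightarrow> cyclic3 (arc_param J x) (arc_param J y) (arc_param J z)"
proof -
  note ends = open_arc_ends[OF J]
  have "ccw (cis (arc_param J x)) (cis (arc_param J y)) (cis (arc_param J z))
      \<longleftrightarrow> cyclic3 (arc_param J x) (arc_param J y) (arc_param J z)"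
    using arc_param[OF J xyz(1)] arc_param[OF J xyz(2)] arc_param[OF J xyz(3)] ends(2)
    by (intro ccw_cis_window_iff[of "arc_start J"]) auto
  then show ?thesis using arc_param(3)[OF J] xyz by simp
qed

definition ccw_compatible :: "complex set \<Rightarrow> complex set \<Rightarrow> (complex \<Rightarrow> complex) \<Rightarrow> bool" where
  "ccw_compatible J K f \<longleftrightarrow> bij_betw f J K \<and>
     (\<forall>x\<in>J. \<forall>y\<in>J. \<forall>z\<in>J. ccw x y z \<longrightarrow> ccw (f x) (f y) (f z)) \<and>
     (\<forall>x\<in>J. \<forall>y\<in>J. \<forall>z\<in>S1 - J. \<forall>w\<in>S1 - K. ccw x y z \<longrightarrow> ccw (f x) (f y) w)"

lemma ccw_compatible_cong:
  "ccw_compatible J K f \<Longrightarrow> (\<And>z. z \<in> J \<Longrightarrow> g z = f z) \<Longrightarrow> ccw_compatible J K g"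
  unfolding ccw_compatible_def by (simp cong: bij_betw_cong)

lemma ccw_compatible_singleton: "ccw_compatible {p} {q} (\<lambda>_. q)"
  unfolding ccw_compatible_def bij_betw_def using ccw_distinct by auto

lemma ccw_compatible_of_param:
  assumes J: "open_arc J" and K: "open_arc K" and bij: "bij_betw f J K"
    and L: "strict_mono L" and param: "\<And>z. z \<in> J \<Longrightarrow> arc_param K (f z) = L (arc_param J z)"
  shows "ccw_compatible J K f"
proof -
  have fK: "f z \<in> K" if "z \<in> J" for z using bij that unfolding bij_betw_def by blast
  have "ccw (f x) (f y) (f z)" if "x \<in> J" "y \<in> J" "z \<in> J" "ccw x y z" for x y z
  proof -
    have "cyclic3 (arc_param J x) (arc_param J y) (arc_param J z)"
      using ccw_arc_iff[OF J that(1-3)] that(4) by simp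
    then have "cyclic3 (L (arc_param J x)) (L (arc_param J y)) (L (arc_param J z))"
      using cyclic3_strict_mono_on[OF L] by simp
    then show ?thesis using ccw_arc_iff[OF K] fK param that by simp
  qed
  moreover have "ccw (f x) (f y) w"
    if "x \<in> J" "y \<in> J" "z \<in> S1 - J" "w \<in> S1 - K" "ccw x y z" for x y z w
  proof -
    have "arc_param J x < arc_param J y" using ccw_arc_outside_iff[OF J that(1,2)] that(3-5) by simp
    then have "L (arc_param J x) < L (arc_param J y)" by (simp add: strict_mono_less[OF L])
    then show ?thesis using ccw_arc_outside_iff[OF K] fK param that by simp
  qed
  ultimately show ?thesis using bij unfolding ccw_compatible_def by blast
qed

lemma ccw_compatible_open_arcs:
  assumes J: "open_arc J" and K: "open_arc K"
  obtains f where "ccw_compatible J K f"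
proof -
  define a b c d where "a = arc_start J" "b = arc_end J" "c = arc_start K" "d = arc_end K"
  have ab: "a < b" "J = cis ` {a<..<b}" and cd: "c < d" "K = cis ` {c<..<d}"
    using open_arc_ends[OF J] open_arc_ends[OF K] unfolding a_b_c_d_def by auto
  have pJ: "a < arc_param J z" "arc_param J z < b" "cis (arc_param J z) = z" if "z \<in> J" for z
    using arc_param[OF J that] unfolding a_b_c_d_def by auto
  have pJ_cis: "arc_param J (cis t) = t" if "a < t" "t < b" for t
    using arc_param_cis[OF J] that unfolding a_b_c_d_def by auto
  have pK_cis: "arc_param K (cis t) = t" if "c < t" "t < d" for t
    using arc_param_cis[OF K] that unfolding a_b_c_d_def by auto
  define L where "L = affine_interp a b c d"
  define f where "f z = cis (L (arc_param J z))" for z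
  have L_mono: "strict_mono L" unfolding L_def using ab cd by (intro strict_mono_affine_interp)
  have L_image: "L ` {a<..<b} = {c<..<d}" unfolding L_def using ab cd by (intro affine_interp_image)
  have L_in: "c < L (arc_param J z) \<and> L (arc_param J z) < d" if "z \<in> J" for z
    using pJ[OF that] L_image by auto
  have param_f: "arc_param K (f z) = L (arc_param J z)" if "z \<in> J" for z
    using L_in[OF that] pK_cis unfolding f_def by simp
  have "f ` J = K"
  proof
    show "f ` J \<subseteq> K" using L_in cd(2) unfolding f_def by auto
    show "K \<subseteq> f ` J"
    proof
      fix w assume "w \<in> K"
      then obtain u where u: "u \<in> {c<..<d}" "w = cis u" using cd(2) by blast
      then obtain t where t: "t \<in> {a<..<b}" "u = L t" using L_image by (metis imageE)
      then have "f (cis t) = w" unfolding f_def using pJ_cis u by auto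
      moreover have "cis t \<in> J" using t ab(2) by blast
      ultimately show "w \<in> f ` J" by blast
    qed
  qed
  moreover have "inj_on f J"
  proof
    fix x y assume xy: "x \<in> J" "y \<in> J" "f x = f y"
    have "L (arc_param J x) = L (arc_param J y)"
      using param_f[OF xy(1)] param_f[OF xy(2)] xy(3) by metis
    then have "arc_param J x = arc_param J y" by (simp add: strict_mono_eq[OF L_mono])
    then show "x = y" using pJ(3)[OF xy(1)] pJ(3)[OF xy(2)] by metis
  qed
  ultimately have "bij_betw f J K" by (simp add: bij_betw_def)
  then show ?thesis using ccw_compatible_of_param[OF J K _ L_mono param_f] that by blast
qed

lemma ccw_compatible_exists:
  assumes "is_singleton J \<and> is_singleton K \<or> open_arc J \<and> open_arc K"
  obtains f where "ccw_compatible J K f"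
proof (cases "is_singleton J \<and> is_singleton K")
  case True
  then obtain p q where "J = {p}" "K = {q}" unfolding is_singleton_def by blast
  then show ?thesis using ccw_compatible_singleton that by blast
next
  case False
  then show ?thesis using assms ccw_compatible_open_arcs that by blast
qed

lemma ccw_compatible_glue:
  assumes disj: "pairwise disjnt A" and comp: "\<And>J. J \<in> A \<Longrightarrow> \<exists>\<phi>. ccw_compatible J (h J) \<phi>"
  obtains f where "\<And>J. J \<in> A \<Longrightarrow> ccw_compatible J (h J) f"
proof -
  have "\<forall>J\<in>A. \<exists>\<phi>. ccw_compatible J (h J) \<phi>" using comp by blast
  then obtain \<phi> where \<phi>: "\<forall>J\<in>A. ccw_compatible J (h J) (\<phi> J)" by (rule bchoice[THEN exE])
  define f where "f z = \<phi> (THE J. J \<in> A \<and> z \<in> J) z" for z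
  have f_eq: "f z = \<phi> J z" if J: "J \<in> A" "z \<in> J" for J z
  proof -
    have "(THE J. J \<in> A \<and> z \<in> J) = J"
    proof (rule the_equality)
      fix K assume "K \<in> A \<and> z \<in> K"
      then show "K = J" using J disj unfolding pairwise_def disjnt_def by blast
    qed (use J in blast)
    then show ?thesis unfolding f_def by simp
  qed
  have "ccw_compatible J (h J) f" if "J \<in> A" for J
  proof (rule ccw_compatible_cong)
    show "ccw_compatible J (h J) (\<phi> J)" using \<phi> that by blast
  qed (rule f_eq[OF that])
  then show ?thesis by (rule that)
qed

lemma ccw_preserving_piecewise:
  assumes S: "\<And>J. J \<in> A \<Longrightarrow> J \<subseteq> S1 \<and> h J \<subseteq> S1"
    and disj: "pairwise disjnt A" "\<And>J K. J \<in> A \<Longrightarrow> K \<in> A \<Longrightarrow> J \<noteq> K \<Longrightarrow> disjnt (h J) (h K)"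
    and comp: "\<And>J. J \<in> A \<Longrightarrow> ccw_compatible J (h J) f"
    and pres: "\<And>J1 J2 J3 x1 x2 x3. J1 \<in> A \<Longrightarrow> J2 \<in> A \<Longrightarrow> J3 \<in> A \<Longrightarrow> distinct [J1, J2, J3] \<Longrightarrow>
       x1 \<in> J1 \<Longrightarrow> x2 \<in> J2 \<Longrightarrow> x3 \<in> J3 \<Longrightarrow> ccw x1 x2 x3 \<Longrightarrow> ccw (f x1) (f x2) (f x3)"
    and xyz: "x \<in> J1" "y \<in> J2" "z \<in> J3" "J1 \<in> A" "J2 \<in> A" "J3 \<in> A" and c: "ccw x y z"
  shows "ccw (f x) (f y) (f z)"
proof -
  have f_in: "f u \<in> h J" if "J \<in> A" "u \<in> J" for J u
    using comp[OF that(1)] that(2) unfolding ccw_compatible_def bij_betw_def by blast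
  have pair: "ccw (f u) (f v) (f w)"
    if "J \<in> A" "K \<in> A" "J \<noteq> K" "u \<in> J" "v \<in> J" "w \<in> K" "ccw u v w" for J K u v w
  proof -
    have "w \<in> S1 - J" using that S disj(1) unfolding pairwise_def disjnt_def by blast
    moreover have "f w \<in> S1 - h J" using f_in[of K w] that S disj(2)[of J K] unfolding disjnt_def by blast
    ultimately show ?thesis using comp[OF that(1)] that unfolding ccw_compatible_def by blast
  qed
  consider "J1 = J2" "J2 = J3" | "J1 = J2" "J2 \<noteq> J3" | "J2 = J3" "J1 \<noteq> J2" | "J1 = J3" "J1 \<noteq> J2"
    | "distinct [J1, J2, J3]" by auto
  then show ?thesis
  proof cases
    case 1
    then show ?thesis using comp[OF xyz(4)] xyz c unfolding ccw_compatible_def by blast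
  next
    case 2
    then show ?thesis using pair[of J1 J3 x y z] xyz c by blast
  next
    case 3
    then show ?thesis using pair[of J2 J1 y z x] xyz c ccw_rotate_iff by metis
  next
    case 4
    then show ?thesis using pair[of J3 J2 z x y] xyz c ccw_rotate_iff by metis
  next
    case 5
    then show ?thesis using pres xyz c by blast
  qed
qed

definition dense_arc_family :: "complex set set \<Rightarrow> bool" where
  "dense_arc_family A \<longleftrightarrow> (\<forall>J\<in>A. J \<noteq> {} \<and> J \<subseteq> S1) \<and> pairwise disjnt A \<and>
     closure (\<Union>A) = S1 \<and> (\<forall>J\<in>A. is_singleton J \<or> open_arc J)"

lemma dense_arc_family_homeo:
  assumes A: "dense_arc_family A" and B: "dense_arc_family B" and bij: "bij_betw h A B"
    and sing: "\<And>J. J \<in> A \<Longrightarrow> is_singleton (h J) \<longleftrightarrow> is_singleton J"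
    and pres: "\<And>J1 J2 J3 x1 x2 x3 y1 y2 y3. J1 \<in> A \<Longrightarrow> J2 \<in> A \<Longrightarrow> J3 \<in> A \<Longrightarrow>
      distinct [J1, J2, J3] \<Longrightarrow> x1 \<in> J1 \<Longrightarrow> x2 \<in> J2 \<Longrightarrow> x3 \<in> J3 \<Longrightarrow>
      y1 \<in> h J1 \<Longrightarrow> y2 \<in> h J2 \<Longrightarrow> y3 \<in> h J3 \<Longrightarrow> ccw x1 x2 x3 \<Longrightarrow> ccw y1 y2 y3"
  obtains g where "circle_homeo g" "\<And>J. J \<in> A \<Longrightarrow> g ` J = h J"
proof -
  have hB: "h J \<in> B" if "J \<in> A" for J using bij that unfolding bij_betw_def by blast
  have disjA: "pairwise disjnt A" and disjB: "pairwise disjnt B"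
    using A B unfolding dense_arc_family_def by auto
  have disj_h: "disjnt (h J) (h K)" if "J \<in> A" "K \<in> A" "J \<noteq> K" for J K
  proof -
    have "h J \<noteq> h K" using inj_onD[OF bij_betw_imp_inj_on[OF bij]] that by blast
    then show ?thesis using disjB hB that unfolding pairwise_def by blast
  qed
  have "\<exists>\<phi>. ccw_compatible J (h J) \<phi>" if "J \<in> A" for J
    using A B hB[OF that] sing[OF that] that ccw_compatible_exists[of J "h J"]
    unfolding dense_arc_family_def by metis
  then obtain f where comp: "\<And>J. J \<in> A \<Longrightarrow> ccw_compatible J (h J) f"
    using ccw_compatible_glue[OF disjA] by blast
  have f_img: "f ` J = h J" and f_inj: "inj_on f J" if "J \<in> A" for J
    using comp[OF that] unfolding ccw_compatible_def bij_betw_def by blast+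
  have inj: "inj_on f (\<Union>A)"
  proof (rule inj_onI)
    fix x y assume "x \<in> \<Union>A" "y \<in> \<Union>A" and eq: "f x = f y"
    then obtain Jx Jy where J: "Jx \<in> A" "x \<in> Jx" "Jy \<in> A" "y \<in> Jy" by blast
    have "f x \<in> h Jx" "f y \<in> h Jy" using f_img[OF J(1)] f_img[OF J(3)] J(2,4) by auto
    then have "Jx = Jy" using disj_h[OF J(1,3)] eq unfolding disjnt_def by auto
    then show "x = y" using inj_onD[OF f_inj[OF J(1)] eq J(2)] J(4) by simp
  qed
  have "f ` \<Union>A = (\<Union>J\<in>A. f ` J)" by blast
  also have "\<dots> = \<Union>(h ` A)" using f_img by simp
  finally have img: "f ` \<Union>A = \<Union>B" using bij unfolding bij_betw_def by simp
  have ccw_f: "ccw (f x) (f y) (f z)"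
    if xyz: "x \<in> \<Union>A" "y \<in> \<Union>A" "z \<in> \<Union>A" and c: "ccw x y z" for x y z
  proof -
    obtain J1 J2 J3 where J: "x \<in> J1" "y \<in> J2" "z \<in> J3" "J1 \<in> A" "J2 \<in> A" "J3 \<in> A"
      using xyz by blast
    show ?thesis
    proof (rule ccw_preserving_piecewise[OF _ disjA disj_h comp _ J c])
      show "J \<subseteq> S1 \<and> h J \<subseteq> S1" if "J \<in> A" for J
        using A B hB[OF that] that unfolding dense_arc_family_def by auto
      show "ccw (f x1) (f x2) (f x3)" if "J1 \<in> A" "J2 \<in> A" "J3 \<in> A" "distinct [J1, J2, J3]"
        "x1 \<in> J1" "x2 \<in> J2" "x3 \<in> J3" "ccw x1 x2 x3" for J1 J2 J3 x1 x2 x3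
        using pres[OF that(1-7) _ _ _ that(8)] f_img that(1-3,5-7) by blast
    qed
  qed
  have "\<Union>A \<subseteq> S1" "S1 \<subseteq> closure (\<Union>A)" "f ` \<Union>A \<subseteq> S1" "S1 \<subseteq> closure (f ` \<Union>A)"
    using A B img unfolding dense_arc_family_def by auto
  then obtain g where g: "circle_homeo g" "\<And>z. z \<in> \<Union>A \<Longrightarrow> g z = f z"
    using ccw_preserving_extends_to_homeo[OF _ _ _ _ inj ccw_f] by blast
  have "g ` J = f ` J" if "J \<in> A" for J using g(2) that by (intro image_cong) auto
  then show ?thesis using that g(1) f_img by simp
qed

section \<open>Orientation of separation-preserving maps\<close>

locale triple_invariant =
  fixes X :: "'a set" and P :: "'a \<Rightarrow> 'a \<Rightarrow> 'a \<Rightarrow> bool"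
  assumes rotate: "\<And>a b c. a \<in> X \<Longrightarrow> b \<in> X \<Longrightarrow> c \<in> X \<Longrightarrow> distinct [a, b, c] \<Longrightarrow> P a b c = P b c a"
    and swap: "\<And>a b c. a \<in> X \<Longrightarrow> b \<in> X \<Longrightarrow> c \<in> X \<Longrightarrow> distinct [a, b, c] \<Longrightarrow> P a b c = P b a c"
    and replace: "\<And>a b c d. a \<in> X \<Longrightarrow> b \<in> X \<Longrightarrow> c \<in> X \<Longrightarrow> d \<in> X \<Longrightarrow> distinct [a, b, c, d] \<Longrightarrow>
      P a b c = P a b d"
begin

lemma swap23:
  assumes "a \<in> X" "b \<in> X" "c \<in> X" "distinct [a, b, c]"
  shows "P a b c = P a c b"
proof -
  have "distinct [c, a, b]" using assms(4) by auto
  then have "P c a b = P a b c" "P c a b = P a c b"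
    using rotate[OF assms(3,1,2)] swap[OF assms(3,1,2)] by blast+
  then show ?thesis by simp
qed

lemma replace3:
  assumes "a \<in> X" "b \<in> X" "c \<in> X" "d \<in> X" "distinct [a, b, c]" "distinct [a, b, d]"
  shows "P a b c = P a b d"
proof (cases "c = d")
  case False
  then show ?thesis using replace[of a b c d] assms by simp
qed simp

lemma all_equal_first:
  assumes X: "a \<in> X" "b \<in> X" "c \<in> X" "e \<in> X" "f \<in> X" and "distinct [a, b, c]" "distinct [a, e, f]"
  shows "P a b c = P a e f"
proof (cases "e = b")
  case True
  then show ?thesis using replace3[of a b c f] assms by simp
next
  case False
  show ?thesis
  proof (cases "e = c")
    case True
    have "P a b c = P a c b" using swap23[of a b c] assms by simp
    also have "\<dots> = P a c f" using replace3[of a c b f] assms True by auto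
    finally show ?thesis using True by simp
  next
    case False
    have "P a b c = P a b e" using replace3[of a b c e] assms \<open>e \<noteq> b\<close> by simp
    also have "\<dots> = P a e b" using swap23[of a b e] assms \<open>e \<noteq> b\<close> by simp
    also have "\<dots> = P a e f" using replace3[of a e b f] assms \<open>e \<noteq> b\<close> by simp
    finally show ?thesis .
  qed
qed

lemma all_equal:
  assumes X: "a \<in> X" "b \<in> X" "c \<in> X" "d \<in> X" "e \<in> X" "f \<in> X"
    and abc: "distinct [a, b, c]" and def: "distinct [d, e, f]"
  shows "P a b c = P d e f"
proof -
  consider "d = a" | "d = b" | "d = c" | "d \<notin> {a, b, c}" by auto
  then show ?thesis
  proof cases
    case 1
    then show ?thesis using all_equal_first[of a b c e f] assms by auto
  next
    case 2
    have "P a b c = P b c a" using rotate[of a b c] assms by auto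
    also have "\<dots> = P d e f" using all_equal_first[of b c a e f] assms 2 by auto
    finally show ?thesis .
  next
    case 3
    have "P a b c = P b c a" using rotate[of a b c] assms by auto
    also have "\<dots> = P c a b" using rotate[of b c a] assms by auto
    also have "\<dots> = P d e f" using all_equal_first[of c a b e f] assms 3 by auto
    finally show ?thesis .
  next
    case 4
    have "P a b c = P b c a" using rotate[of a b c] assms by auto
    also have "\<dots> = P b c d" using replace3[of b c a d] 4 assms by auto
    also have "\<dots> = P c d b" using rotate[of b c d] 4 assms by auto
    also have "\<dots> = P d b c" using rotate[of c d b] 4 assms by auto
    also have "\<dots> = P d e f" using all_equal_first[of d b c e f] 4 assms by auto
    finally show ?thesis .
  qed
qed
end

lemma separates_preserved:
  fixes \<rho> \<psi> :: "'a \<Rightarrow> complex"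
  assumes inj: "inj_on \<rho> X" "inj_on \<psi> X" and S: "\<rho> ` X \<subseteq> S1" "\<psi> ` X \<subseteq> S1"
    and H: "\<And>a b c d. a \<in> X \<Longrightarrow> b \<in> X \<Longrightarrow> c \<in> X \<Longrightarrow> d \<in> X \<Longrightarrow> distinct [a, b, c, d] \<Longrightarrow>
      separates (\<rho> a) (\<rho> c) (\<rho> b) (\<rho> d) \<Longrightarrow> \<not> separates (\<psi> a) (\<psi> b) (\<psi> c) (\<psi> d)"
    and X: "a \<in> X" "b \<in> X" "c \<in> X" "d \<in> X" and dist: "distinct [a, b, c, d]"
  shows "separates (\<rho> a) (\<rho> b) (\<rho> c) (\<rho> d) \<longleftrightarrow> separates (\<psi> a) (\<psi> b) (\<psi> c) (\<psi> d)"
proof -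
  have cases: "separates (f a) (f b) (f c) (f d) \<or> separates (f a) (f c) (f b) (f d) \<or>
      separates (f a) (f d) (f b) (f c)"
    if "inj_on f X" "f ` X \<subseteq> S1" "a \<in> X" "b \<in> X" "c \<in> X" "d \<in> X" "distinct [a, b, c, d]"
    for f :: "'a \<Rightarrow> complex" and a b c d
    using that by (intro separates_cases) (auto simp: inj_on_eq_iff)
  have imp: "separates (\<psi> a) (\<psi> b) (\<psi> c) (\<psi> d)" if sep: "separates (\<rho> a) (\<rho> b) (\<rho> c) (\<rho> d)"
    and X: "a \<in> X" "b \<in> X" "c \<in> X" "d \<in> X" and dist: "distinct [a, b, c, d]" for a b c d
  proof -
    have "\<not> separates (\<psi> a) (\<psi> c) (\<psi> b) (\<psi> d)" using H[of a c b d] sep X dist by auto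
    moreover have "\<not> separates (\<psi> a) (\<psi> d) (\<psi> b) (\<psi> c)"
    proof
      assume "separates (\<psi> a) (\<psi> d) (\<psi> b) (\<psi> c)"
      then have "separates (\<psi> c) (\<psi> b) (\<psi> d) (\<psi> a)"
        using separates_commute(1)[OF separates_commute(3)] separates_commute(2) by blast
      moreover have "separates (\<rho> c) (\<rho> d) (\<rho> b) (\<rho> a)"
        using separates_commute(2)[OF separates_commute(3)[OF sep]] .
      ultimately show False using H[of c b d a] X dist by auto
    qed
    ultimately show ?thesis using cases[OF inj(2) S(2) X dist] by blast
  qed
  show ?thesis
  proof
    show "separates (\<psi> a) (\<psi> b) (\<psi> c) (\<psi> d)" if "separates (\<rho> a) (\<rho> b) (\<rho> c) (\<rho> d)"
      using imp[OF that X dist] .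
  next
    assume sep: "separates (\<psi> a) (\<psi> b) (\<psi> c) (\<psi> d)"
    have "\<not> separates (\<psi> a) (\<psi> c) (\<psi> b) (\<psi> d)"
      using separates_not_separates[of "\<psi> a" "\<psi> b" "\<psi> c" "\<psi> d"] sep by blast
    moreover have "\<not> separates (\<psi> a) (\<psi> d) (\<psi> b) (\<psi> c)"
      using separates_not_separates[of "\<psi> a" "\<psi> b" "\<psi> d" "\<psi> c"] separates_commute(2)[OF sep] by blast
    ultimately show "separates (\<rho> a) (\<rho> b) (\<rho> c) (\<rho> d)"
      using cases[OF inj(1) S(1) X dist] imp[of a c b d] imp[of a d b c] X dist by auto
  qed
qed

lemma separation_preserving_orientation_cases:
  fixes \<rho> \<psi> :: "'a \<Rightarrow> complex"
  assumes inj: "inj_on \<rho> X" "inj_on \<psi> X" and S: "\<rho> ` X \<subseteq> S1" "\<psi> ` X \<subseteq> S1"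
    and sep: "\<And>a b c d. a \<in> X \<Longrightarrow> b \<in> X \<Longrightarrow> c \<in> X \<Longrightarrow> d \<in> X \<Longrightarrow> distinct [a, b, c, d] \<Longrightarrow>
      separates (\<rho> a) (\<rho> b) (\<rho> c) (\<rho> d) \<longleftrightarrow> separates (\<psi> a) (\<psi> b) (\<psi> c) (\<psi> d)"
  shows "(\<forall>a\<in>X. \<forall>b\<in>X. \<forall>c\<in>X. distinct [a, b, c] \<longrightarrow> (ccw (\<rho> a) (\<rho> b) (\<rho> c) \<longleftrightarrow> ccw (\<psi> a) (\<psi> b) (\<psi> c))) \<or>
    (\<forall>a\<in>X. \<forall>b\<in>X. \<forall>c\<in>X. distinct [a, b, c] \<longrightarrow> (ccw (\<rho> a) (\<rho> b) (\<rho> c) \<longleftrightarrow> \<not> ccw (\<psi> a) (\<psi> b) (\<psi> c)))"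
proof -
  have dist_img: "distinct [f a, f b, f c]" "f a \<in> S1" "f b \<in> S1" "f c \<in> S1"
    if "inj_on f X" "f ` X \<subseteq> S1" "a \<in> X" "b \<in> X" "c \<in> X" "distinct [a, b, c]" for f :: "'a \<Rightarrow> complex" and a b c
    using that by (auto simp: inj_on_eq_iff)
  have swap_iff: "ccw (f b) (f a) (f c) \<longleftrightarrow> \<not> ccw (f a) (f b) (f c)"
    if "inj_on f X" "f ` X \<subseteq> S1" "a \<in> X" "b \<in> X" "c \<in> X" "distinct [a, b, c]" for f :: "'a \<Rightarrow> complex" and a b c
  proof -
    have "ccw (f b) (f a) (f c) \<longleftrightarrow> ccw (f a) (f c) (f b)" by (rule ccw_rotate_iff)
    also have "\<dots> \<longleftrightarrow> \<not> ccw (f a) (f b) (f c)" using dist_img[OF that] by (intro ccw_swap_iff) auto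
    finally show ?thesis .
  qed
  interpret triple_invariant X "\<lambda>a b c. ccw (\<rho> a) (\<rho> b) (\<rho> c) \<longleftrightarrow> ccw (\<psi> a) (\<psi> b) (\<psi> c)"
  proof
    show "(ccw (\<rho> a) (\<rho> b) (\<rho> c) \<longleftrightarrow> ccw (\<psi> a) (\<psi> b) (\<psi> c)) \<longleftrightarrow>
        (ccw (\<rho> b) (\<rho> c) (\<rho> a) \<longleftrightarrow> ccw (\<psi> b) (\<psi> c) (\<psi> a))" for a b c
      using ccw_rotate_iff by blast
    show "(ccw (\<rho> a) (\<rho> b) (\<rho> c) \<longleftrightarrow> ccw (\<psi> a) (\<psi> b) (\<psi> c)) \<longleftrightarrow>
        (ccw (\<rho> b) (\<rho> a) (\<rho> c) \<longleftrightarrow> ccw (\<psi> b) (\<psi> a) (\<psi> c))"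
      if "a \<in> X" "b \<in> X" "c \<in> X" "distinct [a, b, c]" for a b c
      using swap_iff[OF inj(1) S(1) that] swap_iff[OF inj(2) S(2) that] by blast
    show "(ccw (\<rho> a) (\<rho> b) (\<rho> c) \<longleftrightarrow> ccw (\<psi> a) (\<psi> b) (\<psi> c)) \<longleftrightarrow>
        (ccw (\<rho> a) (\<rho> b) (\<rho> d) \<longleftrightarrow> ccw (\<psi> a) (\<psi> b) (\<psi> d))"
      if X: "a \<in> X" "b \<in> X" "c \<in> X" "d \<in> X" and dist: "distinct [a, b, c, d]" for a b c d
    proof -
      have "distinct [\<rho> a, \<rho> b, \<rho> c, \<rho> d]" "distinct [\<psi> a, \<psi> b, \<psi> c, \<psi> d]"
        using dist X inj by (auto simp: inj_on_eq_iff)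
      then show ?thesis
        using ccw_eq_ccw_iff_not_separates[of "\<rho> a" "\<rho> b" "\<rho> c" "\<rho> d"]
          ccw_eq_ccw_iff_not_separates[of "\<psi> a" "\<psi> b" "\<psi> c" "\<psi> d"] sep[OF X dist] X S
        by blast
    qed
  qed
  show ?thesis using all_equal by blast
qed

section \<open>Representatives of the pieces\<close>

lemma ccw_connected_invariant:
  assumes "connected J" "J \<subseteq> S1 - {b, c}" "x \<in> J" "x' \<in> J" "b \<in> S1" "c \<in> S1" "ccw x b c"
  shows "ccw x' b c"
proof (rule ccontr)
  assume "\<not> ccw x' b c"
  moreover have "b \<noteq> c" "x' \<in> S1" "x' \<noteq> b" "x' \<noteq> c" using ccw_distinct[OF assms(7)] assms(2,4) by auto
  ultimately have "ccw x' c b" using ccw_or_swap[of x' b c] assms(5,6) by auto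
  then have "ccw b x' c" by (rule ccw_rotate[OF ccw_rotate])
  moreover have "ccw b c x" using ccw_rotate[OF assms(7)] .
  ultimately have "separates b c x' x" unfolding separates_def circ_ordered_def by simp
  then show False using connected_not_separates[OF assms(1,2,4,3,5,6)] by contradiction
qed

lemma ccw_pieces:
  assumes A: "\<And>J. J \<in> A \<Longrightarrow> connected J \<and> J \<subseteq> S1" "pairwise disjnt A"
    and J: "J1 \<in> A" "J2 \<in> A" "J3 \<in> A" "distinct [J1, J2, J3]"
    and x: "x1 \<in> J1" "x2 \<in> J2" "x3 \<in> J3" and y: "y1 \<in> J1" "y2 \<in> J2" "y3 \<in> J3"
    and c: "ccw x1 x2 x3"
  shows "ccw y1 y2 y3"
proof -
  have disj: "J1 \<inter> J2 = {}" "J2 \<inter> J3 = {}" "J1 \<inter> J3 = {}"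
    using A(2) J unfolding pairwise_def disjnt_def by auto
  have S: "x2 \<in> S1" "x3 \<in> S1" "y1 \<in> S1" "y2 \<in> S1"
    using A(1) J x y by blast+
  have c1: "ccw y1 x2 x3"
    by (rule ccw_connected_invariant[of J1 x2 x3 x1 y1]) (use A(1)[OF J(1)] disj x y S c in auto)
  have c2: "ccw y2 x3 y1"
    by (rule ccw_connected_invariant[of J2 x3 y1 x2 y2])
      (use A(1)[OF J(2)] disj x y S ccw_rotate[OF c1] in auto)
  have "ccw y3 y1 y2"
    by (rule ccw_connected_invariant[of J3 y1 y2 x3 y3])
      (use A(1)[OF J(3)] disj x y S ccw_rotate[OF c2] in auto)
  then show ?thesis by (rule ccw_rotate)
qed

lemma circ_ordered_imp_set_cyc4:
  assumes A: "\<And>J. J \<in> A \<Longrightarrow> connected J \<and> J \<subseteq> S1" "pairwise disjnt A"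
    and J: "J1 \<in> A" "J2 \<in> A" "J3 \<in> A" "J4 \<in> A" "distinct [J1, J2, J3, J4]"
    and x: "x1 \<in> J1" "x2 \<in> J2" "x3 \<in> J3" "x4 \<in> J4" and ord: "circ_ordered x1 x2 x3 x4"
  shows "set_cyc4 J1 J2 J3 J4"
  unfolding set_cyc4_def
proof (intro conjI ballI)
  show "J1 \<noteq> {}" "J2 \<noteq> {}" "J3 \<noteq> {}" "J4 \<noteq> {}" using x by auto
  show "pairwise disjnt {J1, J2, J3, J4}" using pairwise_subset[OF A(2)] J by auto
  show "distinct [J1, J2, J3, J4]" by (rule J(5))
  fix y1 y2 y3 y4 assume y: "y1 \<in> J1" "y2 \<in> J2" "y3 \<in> J3" "y4 \<in> J4"
  have d: "distinct [J1, J2, J3]" "distinct [J1, J3, J4]" "distinct [J1, J4, J3]" "distinct [J1, J3, J2]"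
    using J(5) by auto
  have "ccw x1 x2 x3 \<Longrightarrow> ccw y1 y2 y3" "ccw x1 x3 x4 \<Longrightarrow> ccw y1 y3 y4"
    "ccw x1 x4 x3 \<Longrightarrow> ccw y1 y4 y3" "ccw x1 x3 x2 \<Longrightarrow> ccw y1 y3 y2"
    using ccw_pieces[OF A J(1,2,3) d(1) x(1,2,3) y(1,2,3)] ccw_pieces[OF A J(1,3,4) d(2) x(1,3,4) y(1,3,4)]
      ccw_pieces[OF A J(1,4,3) d(3) x(1,4,3) y(1,4,3)] ccw_pieces[OF A J(1,3,2) d(4) x(1,3,2) y(1,3,2)]
    by auto
  then have "circ_ordered y1 y2 y3 y4"
    using ord unfolding circ_ordered_def by blast
  then show "cyc4 y1 y2 y3 y4" by (simp add: cyc4_iff_circ_ordered)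
qed

lemma dense_arc_family_pieces:
  "dense_arc_family A \<Longrightarrow> J \<in> A \<Longrightarrow> connected J \<and> J \<subseteq> S1"
  unfolding dense_arc_family_def is_singleton_def by (auto intro: connected_open_arc)

lemma open_arc_cnj:
  assumes "open_arc J" shows "open_arc (cnj ` J)"
proof -
  obtain a b where ab: "a < b" "b - a < 2 * pi" "J = cis ` {a<..<b}"
    using assms unfolding open_arc_def by blast
  have "cnj ` J = (\<lambda>t. cis (- t)) ` {a<..<b}" unfolding ab(3) by (auto simp: image_image cis_cnj)
  also have "\<dots> = cis ` {- b<..<- a}"
    by (auto simp: image_image image_iff intro!: bexI[of _ "- _"])
  finally show ?thesis unfolding open_arc_def using ab by (intro exI[of _ "- b"] exI[of _ "- a"]) auto
qed

lemma cnj_image_cnj_image [simp]: "cnj ` cnj ` X = X"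
  by (simp add: image_image)

lemma dense_arc_family_cnj:
  assumes A: "dense_arc_family A"
  shows "dense_arc_family ((`) cnj ` A)"
proof -
  have S1: "cnj ` S1 = S1" by (auto intro!: image_eqI[of _ cnj "cnj _"])
  have pieces: "K \<noteq> {} \<and> K \<subseteq> S1 \<and> (is_singleton K \<or> open_arc K)" if K: "K \<in> (`) cnj ` A" for K
  proof -
    obtain J where J: "J \<in> A" "K = cnj ` J" using K by blast
    then have "J \<noteq> {}" "J \<subseteq> S1" "is_singleton J \<or> open_arc J"
      using A unfolding dense_arc_family_def by auto
    then show ?thesis using J(2) S1 open_arc_cnj unfolding is_singleton_def by auto
  qed
  have "pairwise disjnt ((`) cnj ` A)"
  proof (rule pairwiseI)
    fix K1 K2 assume "K1 \<in> (`) cnj ` A" "K2 \<in> (`) cnj ` A" "K1 \<noteq> K2"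
    then obtain J1 J2 where J: "J1 \<in> A" "J2 \<in> A" "K1 = cnj ` J1" "K2 = cnj ` J2" "J1 \<noteq> J2"
      by blast
    then have "disjnt J1 J2" using A unfolding dense_arc_family_def pairwise_def by blast
    then show "disjnt K1 K2" using J(3,4) unfolding disjnt_def by auto
  qed
  moreover have "\<Union>((`) cnj ` A) = cnj ` \<Union>A" by blast
  moreover have "closure (cnj ` \<Union>A) = cnj ` closure (\<Union>A)"
    by (rule closure_injective_linear_image[symmetric])
      (auto simp: inj_on_def intro: bounded_linear.linear[OF bounded_linear_cnj])
  ultimately show ?thesis
    using pieces A S1 unfolding dense_arc_family_def by auto
qed

lemma homeo_of_ccw_representatives:
  assumes A: "dense_arc_family A" and B: "dense_arc_family B" and bij: "bij_betw h A B"
    and sing: "\<And>J. J \<in> A \<Longrightarrow> is_singleton (h J) \<longleftrightarrow> is_singleton J"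
    and \<rho>: "\<And>J. J \<in> A \<Longrightarrow> \<rho> J \<in> J" and \<psi>: "\<And>J. J \<in> A \<Longrightarrow> \<psi> J \<in> h J"
    and ccw_rep: "\<And>J1 J2 J3. J1 \<in> A \<Longrightarrow> J2 \<in> A \<Longrightarrow> J3 \<in> A \<Longrightarrow> distinct [J1, J2, J3] \<Longrightarrow>
      ccw (\<rho> J1) (\<rho> J2) (\<rho> J3) \<Longrightarrow> ccw (\<psi> J1) (\<psi> J2) (\<psi> J3)"
  obtains g where "circle_homeo g" "\<And>J. J \<in> A \<Longrightarrow> g ` J = h J"
proof (rule dense_arc_family_homeo[OF A B bij sing])
  have pieces: "\<And>J. J \<in> A \<Longrightarrow> connected J \<and> J \<subseteq> S1" "pairwise disjnt A"
    "\<And>J. J \<in> B \<Longrightarrow> connected J \<and> J \<subseteq> S1" "pairwise disjnt B"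
    using A B dense_arc_family_pieces unfolding dense_arc_family_def by auto
  fix J1 J2 J3 x1 x2 x3 y1 y2 y3
  assume J: "J1 \<in> A" "J2 \<in> A" "J3 \<in> A" "distinct [J1, J2, J3]"
    and x: "x1 \<in> J1" "x2 \<in> J2" "x3 \<in> J3" and y: "y1 \<in> h J1" "y2 \<in> h J2" "y3 \<in> h J3"
    and "ccw x1 x2 x3"
  then have "ccw (\<rho> J1) (\<rho> J2) (\<rho> J3)" using ccw_pieces[OF pieces(1,2) J x \<rho>[OF J(1)] \<rho>[OF J(2)] \<rho>[OF J(3)]] by blast
  then have "ccw (\<psi> J1) (\<psi> J2) (\<psi> J3)" by (rule ccw_rep[OF J])
  moreover have hJ: "h J1 \<in> B" "h J2 \<in> B" "h J3 \<in> B" using bij J unfolding bij_betw_def by auto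
  moreover have "distinct [h J1, h J2, h J3]"
    using J(1-4) bij_betw_imp_inj_on[OF bij] by (auto simp: inj_on_eq_iff)
  ultimately show "ccw y1 y2 y3"
    using ccw_pieces[OF pieces(3,4) hJ _ \<psi>[OF J(1)] \<psi>[OF J(2)] \<psi>[OF J(3)] y] by blast
qed (use that in auto)

lemma homeo_of_reversed_representatives:
  assumes A: "dense_arc_family A" and B: "dense_arc_family B" and bij: "bij_betw h A B"
    and sing: "\<And>J. J \<in> A \<Longrightarrow> is_singleton (h J) \<longleftrightarrow> is_singleton J"
    and \<rho>: "\<And>J. J \<in> A \<Longrightarrow> \<rho> J \<in> J" and \<psi>: "\<And>J. J \<in> A \<Longrightarrow> \<psi> J \<in> h J"
    and ccw_rep: "\<And>J1 J2 J3. J1 \<in> A \<Longrightarrow> J2 \<in> A \<Longrightarrow> J3 \<in> A \<Longrightarrow> distinct [J1, J2, J3] \<Longrightarrow>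
      ccw (\<rho> J1) (\<rho> J2) (\<rho> J3) \<Longrightarrow> ccw (\<psi> J1) (\<psi> J3) (\<psi> J2)"
  obtains g where "circle_homeo g" "\<And>J. J \<in> A \<Longrightarrow> g ` J = h J"
proof -
  have "inj_on (\<lambda>J. cnj ` h J) A"
  proof (rule inj_onI)
    fix J K assume JK: "J \<in> A" "K \<in> A" "cnj ` h J = cnj ` h K"
    have "cnj ` (cnj ` h J) = cnj ` (cnj ` h K)" using JK(3) by (rule arg_cong)
    then have "h J = h K" by simp
    then show "J = K" using inj_onD[OF bij_betw_imp_inj_on[OF bij]] JK(1,2) by blast
  qed
  moreover have "(\<lambda>J. cnj ` h J) ` A = (`) cnj ` B"
    using bij unfolding bij_betw_def by (simp add: image_image[symmetric, of "(`) cnj" h])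
  ultimately have bij': "bij_betw (\<lambda>J. cnj ` h J) A ((`) cnj ` B)" by (rule bij_betw_imageI)
  have sing': "is_singleton (cnj ` h J) \<longleftrightarrow> is_singleton J" if "J \<in> A" for J
    using sing[OF that] unfolding is_singleton_def by (metis cnj_image_cnj_image image_empty image_insert)
  obtain g where g: "circle_homeo g" "\<And>J. J \<in> A \<Longrightarrow> g ` J = cnj ` h J"
  proof (rule homeo_of_ccw_representatives[OF A dense_arc_family_cnj[OF B] bij' sing' \<rho>])
    show "cnj (\<psi> J) \<in> cnj ` h J" if "J \<in> A" for J using \<psi>[OF that] by blast
    show "ccw (cnj (\<psi> J1)) (cnj (\<psi> J2)) (cnj (\<psi> J3))"
      if "J1 \<in> A" "J2 \<in> A" "J3 \<in> A" "distinct [J1, J2, J3]" "ccw (\<rho> J1) (\<rho> J2) (\<rho> J3)" for J1 J2 J3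
      using ccw_cnj[OF ccw_rep[OF that]] by simp
  qed (use that in auto)
  have "circle_homeo (cnj \<circ> g)" by (rule circle_homeo_comp[OF g(1) circle_homeo_cnj])
  moreover have "(cnj \<circ> g) ` J = h J" if "J \<in> A" for J
  proof -
    have "(cnj \<circ> g) ` J = cnj ` g ` J" by (rule image_comp[symmetric])
    then show ?thesis using g(2)[OF that] by simp
  qed
  ultimately show ?thesis using that by blast
qed

lemma representatives_exist:
  assumes "pairwise disjnt A" "\<And>J. J \<in> A \<Longrightarrow> J \<noteq> {}"
  obtains \<rho> where "\<And>J. J \<in> A \<Longrightarrow> \<rho> J \<in> J" "inj_on \<rho> A"
proof -
  define \<rho> where "\<rho> J = (SOME x. x \<in> J)" for J :: "'a set"
  have \<rho>: "\<rho> J \<in> J" if "J \<in> A" for J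
    using assms(2)[OF that] unfolding \<rho>_def by (simp add: some_in_eq)
  moreover have "inj_on \<rho> A"
  proof (rule inj_onI)
    fix J K assume JK: "J \<in> A" "K \<in> A" "\<rho> J = \<rho> K"
    show "J = K"
    proof (rule ccontr)
      assume "J \<noteq> K"
      then have "J \<inter> K = {}" using assms(1) JK(1,2) unfolding pairwise_def disjnt_def by blast
      then show False using \<rho>[OF JK(1)] \<rho>[OF JK(2)] JK(3) by auto
    qed
  qed
  ultimately show ?thesis by (rule that)
qed

lemma components_condition_not_separates:
  assumes pieces: "\<And>J. J \<in> A \<Longrightarrow> connected J \<and> J \<subseteq> S1" "pairwise disjnt A"
    and hA: "\<And>J. J \<in> A \<Longrightarrow> h J \<in> A"
    and \<rho>: "\<And>J. J \<in> A \<Longrightarrow> \<rho> J \<in> J" and \<psi>: "\<And>J. J \<in> A \<Longrightarrow> \<psi> J \<in> h J"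
    and cond: "\<forall>J1\<in>A. \<forall>J2\<in>A. \<forall>J3\<in>A. \<forall>J4\<in>A. set_cyc4 J1 J2 J3 J4 \<longrightarrow>
       (\<exists>C\<in>components (S1 - (h J1 \<union> h J2)). h J3 \<subseteq> C \<and> h J4 \<subseteq> C)"
    and X: "a \<in> A" "b \<in> A" "c \<in> A" "d \<in> A" "distinct [a, b, c, d]"
    and sep: "separates (\<rho> a) (\<rho> c) (\<rho> b) (\<rho> d)"
  shows "\<not> separates (\<psi> a) (\<psi> b) (\<psi> c) (\<psi> d)"
proof -
  have "set_cyc4 a b c d"
    using circ_ordered_imp_set_cyc4[OF pieces X \<rho>[OF X(1)] \<rho>[OF X(2)] \<rho>[OF X(3)] \<rho>[OF X(4)]] sep
    unfolding separates_def by blast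
  then obtain C where C: "C \<in> components (S1 - (h a \<union> h b))" "h c \<subseteq> C" "h d \<subseteq> C"
    using cond X by blast
  show ?thesis
  proof (rule connected_not_separates)
    show "connected C" using in_components_connected[OF C(1)] .
    show "C \<subseteq> S1 - {\<psi> a, \<psi> b}" using in_components_subset[OF C(1)] \<psi> X(1,2) by blast
    show "\<psi> c \<in> C" "\<psi> d \<in> C" using C(2,3) \<psi> X(3,4) by blast+
    show "\<psi> a \<in> S1" "\<psi> b \<in> S1" using \<psi> hA pieces(1) X(1,2) by blast+
  qed
qed

lemma components_condition_imp_order_preserving:
  assumes A: "dense_arc_family A" and bij: "bij_betw h A A"
    and nonsing: "h ` {J\<in>A. \<not> is_singleton J} = {J\<in>A. \<not> is_singleton J}"
    and cond: "\<forall>J1\<in>A. \<forall>J2\<in>A. \<forall>J3\<in>A. \<forall>J4\<in>A. set_cyc4 J1 J2 J3 J4 \<longrightarrow>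
       (\<exists>C\<in>components (S1 - (h J1 \<union> h J2)). h J3 \<subseteq> C \<and> h J4 \<subseteq> C)"
  shows "order_preserving A h"
proof -
  have hA: "h J \<in> A" if "J \<in> A" for J using bij that unfolding bij_betw_def by blast
  have inj_h: "inj_on h A" using bij unfolding bij_betw_def by blast
  have pieces: "\<And>J. J \<in> A \<Longrightarrow> connected J \<and> J \<subseteq> S1" "pairwise disjnt A"
    using A dense_arc_family_pieces unfolding dense_arc_family_def by auto
  have sing: "is_singleton (h J) \<longleftrightarrow> is_singleton J" if "J \<in> A" for J
    using nonsing that hA inj_onD[OF inj_h] by blast
  obtain \<rho> where \<rho>: "\<And>J. J \<in> A \<Longrightarrow> \<rho> J \<in> J" and inj_\<rho>: "inj_on \<rho> A"
    using representatives_exist[OF pieces(2)] A unfolding dense_arc_family_def by blast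
  define \<psi> where "\<psi> = \<rho> \<circ> h"
  have \<psi>: "\<psi> J \<in> h J" if "J \<in> A" for J unfolding \<psi>_def using \<rho> hA that by simp
  have inj_\<psi>: "inj_on \<psi> A"
    unfolding \<psi>_def using comp_inj_on[OF inj_h] inj_on_subset[OF inj_\<rho>] hA by blast
  have S: "\<rho> ` A \<subseteq> S1" "\<psi> ` A \<subseteq> S1" using \<rho> \<psi> hA pieces(1) by blast+
  have "separates (\<rho> a) (\<rho> b) (\<rho> c) (\<rho> d) \<longleftrightarrow> separates (\<psi> a) (\<psi> b) (\<psi> c) (\<psi> d)"
    if "a \<in> A" "b \<in> A" "c \<in> A" "d \<in> A" "distinct [a, b, c, d]" for a b c d
    using separates_preserved[OF inj_\<rho> inj_\<psi> S components_condition_not_separates[OF pieces hA \<rho> \<psi> cond]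
        that] .
  then consider
      "\<And>a b c. a \<in> A \<Longrightarrow> b \<in> A \<Longrightarrow> c \<in> A \<Longrightarrow> distinct [a, b, c] \<Longrightarrow>
        ccw (\<rho> a) (\<rho> b) (\<rho> c) \<Longrightarrow> ccw (\<psi> a) (\<psi> b) (\<psi> c)"
    | "\<And>a b c. a \<in> A \<Longrightarrow> b \<in> A \<Longrightarrow> c \<in> A \<Longrightarrow> distinct [a, b, c] \<Longrightarrow>
        ccw (\<rho> a) (\<rho> b) (\<rho> c) \<Longrightarrow> \<not> ccw (\<psi> a) (\<psi> b) (\<psi> c)"
    using separation_preserving_orientation_cases[OF inj_\<rho> inj_\<psi> S] by blast
  then obtain g where "circle_homeo g" "\<And>J. J \<in> A \<Longrightarrow> g ` J = h J"
  proof cases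
    case 1
    then show ?thesis using homeo_of_ccw_representatives[OF A A bij sing \<rho> \<psi>] that by blast
  next
    case 2
    have "ccw (\<psi> a) (\<psi> c) (\<psi> b)"
      if "a \<in> A" "b \<in> A" "c \<in> A" "distinct [a, b, c]" "ccw (\<rho> a) (\<rho> b) (\<rho> c)" for a b c
    proof -
      have "distinct [\<psi> a, \<psi> b, \<psi> c]" using that(1-4) inj_\<psi> by (simp add: inj_on_eq_iff)
      moreover have "\<psi> a \<in> S1" "\<psi> b \<in> S1" "\<psi> c \<in> S1" using S that(1-3) by blast+
      ultimately show ?thesis using 2[OF that] ccw_swap_iff[of "\<psi> a" "\<psi> b" "\<psi> c"] by simp
    qed
    then show ?thesis using homeo_of_reversed_representatives[OF A A bij sing \<rho> \<psi>] that by blast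
  qed
  then show ?thesis unfolding order_preserving_def by blast
qed

lemma order_preserving_imp_components_condition:
  assumes A: "dense_arc_family A" and op: "order_preserving A h"
    and J: "J1 \<in> A" "J2 \<in> A" "J3 \<in> A" "J4 \<in> A" "set_cyc4 J1 J2 J3 J4"
  shows "\<exists>C\<in>components (S1 - (h J1 \<union> h J2)). h J3 \<subseteq> C \<and> h J4 \<subseteq> C"
proof -
  obtain g where g: "circle_homeo g" "\<And>J. J \<in> A \<Longrightarrow> g ` J = h J"
    using op unfolding order_preserving_def by blast
  have "connected J \<and> J \<subseteq> S1" if "J \<in> A" for J using dense_arc_family_pieces[OF A that] .
  then have "\<exists>C\<in>components (S1 - (g ` J1 \<union> g ` J2)). g ` J3 \<subseteq> C \<and> g ` J4 \<subseteq> C"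
    using J(1-4) by (intro circle_homeo_set_cyc4_component[OF g(1) _ _ _ _ _ _ J(5)]) auto
  then show ?thesis using g(2)[OF J(1)] g(2)[OF J(2)] g(2)[OF J(3)] g(2)[OF J(4)] by simp
qed

theorem mainTheorem3:
  fixes A :: "complex set set" and h :: "complex set \<Rightarrow> complex set"
  assumes sub: "\<forall>J\<in>A. J \<noteq> {} \<and> J \<subseteq> S1"
    and disj: "pairwise disjnt A"
    and card4: "infinite A \<or> card A \<ge> 4"
    and dense: "closure (\<Union>A) = S1"
    and shape: "\<forall>J\<in>A. is_singleton J \<or> open_arc J"
    and bij: "bij_betw h A A"
    and nonsing: "h ` {J\<in>A. \<not> is_singleton J} = {J\<in>A. \<not> is_singleton J}"
  shows "order_preserving A h \<longleftrightarrow>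
    (\<forall>J1\<in>A. \<forall>J2\<in>A. \<forall>J3\<in>A. \<forall>J4\<in>A. set_cyc4 J1 J2 J3 J4 \<longrightarrow>
       (\<exists>C\<in>components (S1 - (h J1 \<union> h J2)). h J3 \<subseteq> C \<and> h J4 \<subseteq> C))"
proof -
  have A: "dense_arc_family A" unfolding dense_arc_family_def using sub disj dense shape by blast
  show ?thesis
  proof
    assume "order_preserving A h"
    then show "\<forall>J1\<in>A. \<forall>J2\<in>A. \<forall>J3\<in>A. \<forall>J4\<in>A. set_cyc4 J1 J2 J3 J4 \<longrightarrow>
        (\<exists>C\<in>components (S1 - (h J1 \<union> h J2)). h J3 \<subseteq> C \<and> h J4 \<subseteq> C)"
      using order_preserving_imp_components_condition[OF A] by blast
  qed (rule components_condition_imp_order_preserving[OF A bij nonsing])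
qed

end
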